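(* Let $P:\mathscr P\to\mathscr T$, $Q:\mathscr Q\to\mathscr T$ and $A:\mathscr T\to\mathscr U$ be morphisms of $\mathscr J$-theories. (1) If $P$ commutes with $Q$, then $A\circ P$ commutes with $A\circ Q$. (2) If $A$ is a subtheory embedding (i.e. its hom-components are monomorphisms in $\mathscr V$) and $A\circ P$ commutes with $A\circ Q$, then $P$ commutes with $Q$.
   Context: $(\mathscr V,\otimes,I)$ is a closed symmetric monoidal category, $\underline{\mathscr V}$ the associated $\mathscr V$-category; everything is $\mathscr V$-enriched. A system of arities is a full sub-$\mathscr V$-category $\mathscr J\hookrightarrow\underline{\mathscr V}$ containing $I$ and closed under $\otimes$. A cotensor $[V,C]$ is an object with counit $V\to\mathscr C([V,C],C)$ inducing $\mathscr C(-,[V,C])\cong\underline{\mathscr V}(V,\mathscr C(-,C))$. A $\mathscr J$-theory is a $\mathscr V$-category $\mathscr T$ with $\mathrm{ob}\,\mathscr T=\mathrm{ob}\,\mathscr J$ and an identity-on-objects $\tau:\mathscr J^{\mathrm{op}}\to\mathscr T$ preserving cotensors by objects of $\mathscr J$; a morphism $(\mathscr T,\tau)\to(\mathscr U,\upsilon)$ is a $\mathscr V$-functor $A$ with $A\tau=\upsilon$. In a theory $(\mathscr T,\tau)$, $J\otimes K$ and $K\otimes J$ are cotensors of $K$ by $J$ with counits $J\xrightarrow{\mathrm{Coev}}\underline{\mathscr V}(K,J\otimes K)=\mathscr J^{\mathrm{op}}(J\otimes K,K)\xrightarrow{\tau}\mathscr T(J\otimes K,K)$ and $J\xrightarrow{\mathrm{Coev}'}\underline{\mathscr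 V}(K,K\otimes J)\xrightarrow{\tau}\mathscr T(K\otimes J,K)$ ($\mathrm{Coev}'$ = coevaluation composed with symmetry), inducing $\mathscr V$-functors $[J,-]_\ell$ ($K\mapsto J\otimes K$) and $[J,-]_r$ ($K\mapsto K\otimes J$). Kronecker products $\mathsf k,\tilde{\mathsf k}:\mathscr T(J,J')\otimes\mathscr T(K,K')\to\mathscr T(J\otimes K,J'\otimes K')$ are composition after $[K,-]_r\otimes[J',-]_\ell$ (into $\mathscr T(J\otimes K,J'\otimes K)\otimes\mathscr T(J'\otimes K,J'\otimes K')$), resp. after $[K',-]_r\otimes[J,-]_\ell$ (into $\mathscr T(J\otimes K',J'\otimes K')\otimes\mathscr T(J\otimes K,J\otimes K')$). Morphisms of theories $P:\mathscr P\to\mathscr T$, $Q:\mathscr Q\to\mathscr T$ commute if $\mathsf k\cdot(P_{JJ'}\otimes Q_{KK'})=\tilde{\mathsf k}\cdot(P_{JJ'}\otimes Q_{KK'})$ in $\mathscr T$ for all $J,J',K,K'\in\mathscr J$. *)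

theory Defs
  imports Main
begin

section \<open>Closed symmetric monoidal categories (the base \<V>)\<close>

record ('o,'m) vbase =
  Ob  :: "'o set"
  Ar  :: "'m set"
  Dom :: "'m \<Rightarrow> 'o"
  Cod :: "'m \<Rightarrow> 'o"
  Cmp :: "'m \<Rightarrow> 'm \<Rightarrow> 'm"          (* Cmp g f = g \<circ> f *)
  Idt :: "'o \<Rightarrow> 'm"
  Tob :: "'o \<Rightarrow> 'o \<Rightarrow> 'o"
  Tar :: "'m \<Rightarrow> 'm \<Rightarrow> 'm"
  Unt :: "'o"
  Asc :: "'o \<Rightarrow> 'o \<Rightarrow> 'o \<Rightarrow> 'm"    (* (X\<otimes>Y)\<otimes>Z \<rightarrow> X\<otimes>(Y\<otimes>Z) *)
  Lu  :: "'o \<Rightarrow> 'm"                 (* I\<otimes>X \<rightarrow> X *)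
  Ru  :: "'o \<Rightarrow> 'm"                 (* X\<otimes>I \<rightarrow> X *)
  Sy  :: "'o \<Rightarrow> 'o \<Rightarrow> 'm"           (* X\<otimes>Y \<rightarrow> Y\<otimes>X *)
  Ih  :: "'o \<Rightarrow> 'o \<Rightarrow> 'o"           (* internal hom [Y,Z] *)
  Ev  :: "'o \<Rightarrow> 'o \<Rightarrow> 'm"           (* [Y,Z]\<otimes>Y \<rightarrow> Z *)

definition hom :: "('o,'m,'x) vbase_scheme \<Rightarrow> 'm \<Rightarrow> 'o \<Rightarrow> 'o \<Rightarrow> bool" where
  "hom V f X Y \<longleftrightarrow> f \<in> Ar V \<and> Dom V f = X \<and> Cod V f = Y"

definition iso_in :: "('o,'m,'x) vbase_scheme \<Rightarrow> 'm \<Rightarrow> bool" where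
  "iso_in V f \<longleftrightarrow> f \<in> Ar V \<and> (\<exists>g. hom V g (Cod V f) (Dom V f) \<and>
      Cmp V g f = Idt V (Dom V f) \<and> Cmp V f g = Idt V (Cod V f))"

definition mono_in :: "('o,'m,'x) vbase_scheme \<Rightarrow> 'm \<Rightarrow> bool" where
  "mono_in V m \<longleftrightarrow> m \<in> Ar V \<and> (\<forall>f g. f \<in> Ar V \<and> g \<in> Ar V \<and> Dom V f = Dom V g \<and>
      Cod V f = Dom V m \<and> Cod V g = Dom V m \<and> Cmp V m f = Cmp V m g \<longrightarrow> f = g)"

definition smcc :: "('o,'m,'x) vbase_scheme \<Rightarrow> bool" where
  "smcc V \<longleftrightarrow>
    \<comment> \<open>category\<close>
    (\<forall>f\<in>Ar V. Dom V f \<in> Ob V \<and> Cod V f \<in> Ob V) \<and>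
    (\<forall>X\<in>Ob V. hom V (Idt V X) X X) \<and>
    (\<forall>f g. f \<in> Ar V \<and> g \<in> Ar V \<and> Cod V f = Dom V g \<longrightarrow> hom V (Cmp V g f) (Dom V f) (Cod V g)) \<and>
    (\<forall>f\<in>Ar V. Cmp V f (Idt V (Dom V f)) = f \<and> Cmp V (Idt V (Cod V f)) f = f) \<and>
    (\<forall>f g h. f \<in> Ar V \<and> g \<in> Ar V \<and> h \<in> Ar V \<and> Cod V f = Dom V g \<and> Cod V g = Dom V h \<longrightarrow>
        Cmp V h (Cmp V g f) = Cmp V (Cmp V h g) f) \<and>
    \<comment> \<open>tensor bifunctor\<close>
    Unt V \<in> Ob V \<and>
    (\<forall>X\<in>Ob V. \<forall>Y\<in>Ob V. Tob V X Y \<in> Ob V) \<and>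
    (\<forall>f\<in>Ar V. \<forall>g\<in>Ar V. hom V (Tar V f g) (Tob V (Dom V f) (Dom V g)) (Tob V (Cod V f) (Cod V g))) \<and>
    (\<forall>X\<in>Ob V. \<forall>Y\<in>Ob V. Tar V (Idt V X) (Idt V Y) = Idt V (Tob V X Y)) \<and>
    (\<forall>f g f' g'. f \<in> Ar V \<and> g \<in> Ar V \<and> f' \<in> Ar V \<and> g' \<in> Ar V \<and>
        Cod V f = Dom V g \<and> Cod V f' = Dom V g' \<longrightarrow>
        Tar V (Cmp V g f) (Cmp V g' f') = Cmp V (Tar V g g') (Tar V f f')) \<and>
    \<comment> \<open>associator, unitors, symmetry: natural isomorphisms\<close>
    (\<forall>X\<in>Ob V. \<forall>Y\<in>Ob V. \<forall>Z\<in>Ob V.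
        hom V (Asc V X Y Z) (Tob V (Tob V X Y) Z) (Tob V X (Tob V Y Z)) \<and> iso_in V (Asc V X Y Z)) \<and>
    (\<forall>f\<in>Ar V. \<forall>g\<in>Ar V. \<forall>h\<in>Ar V.
        Cmp V (Asc V (Cod V f) (Cod V g) (Cod V h)) (Tar V (Tar V f g) h) =
        Cmp V (Tar V f (Tar V g h)) (Asc V (Dom V f) (Dom V g) (Dom V h))) \<and>
    (\<forall>X\<in>Ob V. hom V (Lu V X) (Tob V (Unt V) X) X \<and> iso_in V (Lu V X)) \<and>
    (\<forall>f\<in>Ar V. Cmp V (Lu V (Cod V f)) (Tar V (Idt V (Unt V)) f) = Cmp V f (Lu V (Dom V f))) \<and>
    (\<forall>X\<in>Ob V. hom V (Ru V X) (Tob V X (Unt V)) X \<and> iso_in V (Ru V X)) \<and>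
    (\<forall>f\<in>Ar V. Cmp V (Ru V (Cod V f)) (Tar V f (Idt V (Unt V))) = Cmp V f (Ru V (Dom V f))) \<and>
    (\<forall>X\<in>Ob V. \<forall>Y\<in>Ob V. hom V (Sy V X Y) (Tob V X Y) (Tob V Y X) \<and>
        Cmp V (Sy V Y X) (Sy V X Y) = Idt V (Tob V X Y)) \<and>
    (\<forall>f\<in>Ar V. \<forall>g\<in>Ar V.
        Cmp V (Sy V (Cod V f) (Cod V g)) (Tar V f g) = Cmp V (Tar V g f) (Sy V (Dom V f) (Dom V g))) \<and>
    \<comment> \<open>coherence: pentagon, triangle, hexagon\<close>
    (\<forall>W\<in>Ob V. \<forall>X\<in>Ob V. \<forall>Y\<in>Ob V. \<forall>Z\<in>Ob V.
        Cmp V (Asc V W X (Tob V Y Z)) (Asc V (Tob V W X) Y Z) =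
        Cmp V (Tar V (Idt V W) (Asc V X Y Z))
              (Cmp V (Asc V W (Tob V X Y) Z) (Tar V (Asc V W X Y) (Idt V Z)))) \<and>
    (\<forall>X\<in>Ob V. \<forall>Y\<in>Ob V.
        Cmp V (Tar V (Idt V X) (Lu V Y)) (Asc V X (Unt V) Y) = Tar V (Ru V X) (Idt V Y)) \<and>
    (\<forall>A\<in>Ob V. \<forall>B\<in>Ob V. \<forall>C\<in>Ob V.
        Cmp V (Asc V B C A) (Cmp V (Sy V A (Tob V B C)) (Asc V A B C)) =
        Cmp V (Tar V (Idt V B) (Sy V A C)) (Cmp V (Asc V B A C) (Tar V (Sy V A B) (Idt V C)))) \<and>
    \<comment> \<open>closed structure\<close>
    (\<forall>Y\<in>Ob V. \<forall>Z\<in>Ob V. Ih V Y Z \<in> Ob V \<and> hom V (Ev V Y Z) (Tob V (Ih V Y Z) Y) Z) \<and>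
    (\<forall>X\<in>Ob V. \<forall>Y\<in>Ob V. \<forall>Z\<in>Ob V. \<forall>f. hom V f (Tob V X Y) Z \<longrightarrow>
        (\<exists>!h. hom V h X (Ih V Y Z) \<and> Cmp V (Ev V Y Z) (Tar V h (Idt V Y)) = f))"

definition cur :: "('o,'m,'x) vbase_scheme \<Rightarrow> 'o \<Rightarrow> 'o \<Rightarrow> 'o \<Rightarrow> 'm \<Rightarrow> 'm" where
  "cur V X Y Z f = (THE h. hom V h X (Ih V Y Z) \<and> Cmp V (Ev V Y Z) (Tar V h (Idt V Y)) = f)"

section \<open>\<V>-categories (with objects among the objects of \<V>)\<close>

record ('o,'m) vcat =
  VOb   :: "'o set"
  VHom  :: "'o \<Rightarrow> 'o \<Rightarrow> 'o"
  VComp :: "'o \<Rightarrow> 'o \<Rightarrow> 'o \<Rightarrow> 'm"   (* VComp a b c : C(b,c) \<otimes> C(a,b) \<rightarrow> C(a,c) *)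
  VId   :: "'o \<Rightarrow> 'm"

definition is_vcat :: "('o,'m,'x) vbase_scheme \<Rightarrow> ('o,'m) vcat \<Rightarrow> bool" where
  "is_vcat V C \<longleftrightarrow>
    (\<forall>a\<in>VOb C. \<forall>b\<in>VOb C. VHom C a b \<in> Ob V) \<and>
    (\<forall>a\<in>VOb C. \<forall>b\<in>VOb C. \<forall>c\<in>VOb C.
        hom V (VComp C a b c) (Tob V (VHom C b c) (VHom C a b)) (VHom C a c)) \<and>
    (\<forall>a\<in>VOb C. hom V (VId C a) (Unt V) (VHom C a a)) \<and>
    (\<forall>a\<in>VOb C. \<forall>b\<in>VOb C. \<forall>c\<in>VOb C. \<forall>d\<in>VOb C.
        Cmp V (VComp C a b d) (Tar V (VComp C b c d) (Idt V (VHom C a b))) =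
        Cmp V (VComp C a c d) (Cmp V (Tar V (Idt V (VHom C c d)) (VComp C a b c))
                                     (Asc V (VHom C c d) (VHom C b c) (VHom C a b)))) \<and>
    (\<forall>a\<in>VOb C. \<forall>b\<in>VOb C.
        Cmp V (VComp C a b b) (Tar V (VId C b) (Idt V (VHom C a b))) = Lu V (VHom C a b) \<and>
        Cmp V (VComp C a a b) (Tar V (Idt V (VHom C a b)) (VId C a)) = Ru V (VHom C a b))"

text \<open>Identity-on-objects \<V>-functors between \<V>-categories with the same objects.\<close>
definition vfun :: "('o,'m,'x) vbase_scheme \<Rightarrow> ('o,'m) vcat \<Rightarrow> ('o,'m) vcat \<Rightarrow> ('o \<Rightarrow> 'o \<Rightarrow> 'm) \<Rightarrow> bool" where
  "vfun V C D F \<longleftrightarrow> VOb C = VOb D \<and>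
    (\<forall>a\<in>VOb C. \<forall>b\<in>VOb C. hom V (F a b) (VHom C a b) (VHom D a b)) \<and>
    (\<forall>a\<in>VOb C. \<forall>b\<in>VOb C. \<forall>c\<in>VOb C.
        Cmp V (F a c) (VComp C a b c) = Cmp V (VComp D a b c) (Tar V (F b c) (F a b))) \<and>
    (\<forall>a\<in>VOb C. Cmp V (F a a) (VId C a) = VId D a)"

text \<open>The full sub-\<V>-category \<J> of \<underline>\<V> on the object set Jo, and its opposite.\<close>
definition uV_comp :: "('o,'m,'x) vbase_scheme \<Rightarrow> 'o \<Rightarrow> 'o \<Rightarrow> 'o \<Rightarrow> 'm" where
  "uV_comp V a b c = cur V (Tob V (Ih V b c) (Ih V a b)) a c
     (Cmp V (Ev V b c) (Cmp V (Tar V (Idt V (Ih V b c)) (Ev V a b)) (Asc V (Ih V b c) (Ih V a b) a)))"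

definition uV_id :: "('o,'m,'x) vbase_scheme \<Rightarrow> 'o \<Rightarrow> 'm" where
  "uV_id V a = cur V (Unt V) a a (Lu V a)"

definition jop :: "('o,'m,'x) vbase_scheme \<Rightarrow> 'o set \<Rightarrow> ('o,'m) vcat" where
  "jop V Jo = \<lparr> VOb = Jo, VHom = (\<lambda>a b. Ih V b a),
     VComp = (\<lambda>a b c. Cmp V (uV_comp V c b a) (Sy V (Ih V c b) (Ih V b a))),
     VId = uV_id V \<rparr>"

definition arity_system :: "('o,'m,'x) vbase_scheme \<Rightarrow> 'o set \<Rightarrow> bool" where
  "arity_system V Jo \<longleftrightarrow> Jo \<subseteq> Ob V \<and> Unt V \<in> Jo \<and> (\<forall>a\<in>Jo. \<forall>b\<in>Jo. Tob V a b \<in> Jo)"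

text \<open>The comparison map C(X,c) \<rightarrow> [v, C(X,c0)] induced by a counit e : v \<rightarrow> C(c,c0).\<close>
definition cmpar :: "('o,'m,'x) vbase_scheme \<Rightarrow> ('o,'m) vcat \<Rightarrow> 'o \<Rightarrow> 'o \<Rightarrow> 'o \<Rightarrow> 'm \<Rightarrow> 'o \<Rightarrow> 'm" where
  "cmpar V C v c0 c e X = cur V (VHom C X c) v (VHom C X c0)
     (Cmp V (VComp C X c c0) (Cmp V (Sy V (VHom C X c) (VHom C c c0)) (Tar V (Idt V (VHom C X c)) e)))"

text \<open>(c, e) is a cotensor [v, c0] in C.\<close>
definition is_cotensor :: "('o,'m,'x) vbase_scheme \<Rightarrow> ('o,'m) vcat \<Rightarrow> 'o \<Rightarrow> 'o \<Rightarrow> 'o \<Rightarrow> 'm \<Rightarrow> bool" where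
  "is_cotensor V C v c0 c e \<longleftrightarrow> v \<in> Ob V \<and> c0 \<in> VOb C \<and> c \<in> VOb C \<and> hom V e v (VHom C c c0) \<and>
     (\<forall>X\<in>VOb C. iso_in V (cmpar V C v c0 c e X))"

section \<open>\<J>-theories and their morphisms\<close>

definition Jtheory :: "('o,'m,'x) vbase_scheme \<Rightarrow> 'o set \<Rightarrow> ('o,'m) vcat \<Rightarrow> ('o \<Rightarrow> 'o \<Rightarrow> 'm) \<Rightarrow> bool" where
  "Jtheory V Jo T \<tau> \<longleftrightarrow> is_vcat V T \<and> VOb T = Jo \<and> vfun V (jop V Jo) T \<tau> \<and>
     (\<forall>j\<in>Jo. \<forall>k\<in>Jo. \<forall>c\<in>Jo. \<forall>e. is_cotensor V (jop V Jo) j k c e \<longrightarrow>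
         is_cotensor V T j k c (Cmp V (\<tau> c k) e))"

definition theory_mor :: "('o,'m,'x) vbase_scheme \<Rightarrow> 'o set \<Rightarrow> ('o,'m) vcat \<Rightarrow> ('o \<Rightarrow> 'o \<Rightarrow> 'm)
     \<Rightarrow> ('o,'m) vcat \<Rightarrow> ('o \<Rightarrow> 'o \<Rightarrow> 'm) \<Rightarrow> ('o \<Rightarrow> 'o \<Rightarrow> 'm) \<Rightarrow> bool" where
  "theory_mor V Jo T \<tau> U \<upsilon> A \<longleftrightarrow> vfun V T U A \<and> (\<forall>a\<in>Jo. \<forall>b\<in>Jo. Cmp V (A a b) (\<tau> a b) = \<upsilon> a b)"

definition coev :: "('o,'m,'x) vbase_scheme \<Rightarrow> 'o \<Rightarrow> 'o \<Rightarrow> 'm" where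
  "coev V j k = cur V j k (Tob V j k) (Idt V (Tob V j k))"

definition coev' :: "('o,'m,'x) vbase_scheme \<Rightarrow> 'o \<Rightarrow> 'o \<Rightarrow> 'm" where
  "coev' V j k = cur V j k (Tob V k j) (Sy V j k)"

text \<open>Counits exhibiting J\<otimes>K resp. K\<otimes>J as cotensors of K by J in a theory.\<close>
definition eL :: "('o,'m,'x) vbase_scheme \<Rightarrow> ('o \<Rightarrow> 'o \<Rightarrow> 'm) \<Rightarrow> 'o \<Rightarrow> 'o \<Rightarrow> 'm" where
  "eL V \<tau> j k = Cmp V (\<tau> (Tob V j k) k) (coev V j k)"

definition eR :: "('o,'m,'x) vbase_scheme \<Rightarrow> ('o \<Rightarrow> 'o \<Rightarrow> 'm) \<Rightarrow> 'o \<Rightarrow> 'o \<Rightarrow> 'm" where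
  "eR V \<tau> j k = Cmp V (\<tau> (Tob V k j) k) (coev' V j k)"

text \<open>Hom-component T(K,K') \<rightarrow> T(c,c') of the \<V>-functor induced by cotensors (c,e)=[v,K], (c',e')=[v,K'].\<close>
definition indmap :: "('o,'m,'x) vbase_scheme \<Rightarrow> ('o,'m) vcat \<Rightarrow> 'o \<Rightarrow> 'o \<Rightarrow> 'o
     \<Rightarrow> 'o \<Rightarrow> 'm \<Rightarrow> 'o \<Rightarrow> 'm \<Rightarrow> 'm" where
  "indmap V T v K K' c e c' e' = (THE g. hom V g (VHom T K K') (VHom T c c') \<and>
     Cmp V (cmpar V T v K' c' e' c) g =
     cur V (VHom T K K') v (VHom T c K') (Cmp V (VComp T c K K') (Tar V (Idt V (VHom T K K')) e)))"

text \<open>[J,-]_l on homs: T(K,K') \<rightarrow> T(J\<otimes>K, J\<otimes>K');  [J,-]_r: T(K,K') \<rightarrow> T(K\<otimes>J, K'\<otimes>J).\<close>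
definition lfun :: "('o,'m,'x) vbase_scheme \<Rightarrow> ('o,'m) vcat \<Rightarrow> ('o \<Rightarrow> 'o \<Rightarrow> 'm) \<Rightarrow> 'o \<Rightarrow> 'o \<Rightarrow> 'o \<Rightarrow> 'm" where
  "lfun V T \<tau> j k k' = indmap V T j k k' (Tob V j k) (eL V \<tau> j k) (Tob V j k') (eL V \<tau> j k')"

definition rfun :: "('o,'m,'x) vbase_scheme \<Rightarrow> ('o,'m) vcat \<Rightarrow> ('o \<Rightarrow> 'o \<Rightarrow> 'm) \<Rightarrow> 'o \<Rightarrow> 'o \<Rightarrow> 'o \<Rightarrow> 'm" where
  "rfun V T \<tau> j k k' = indmap V T j k k' (Tob V k j) (eR V \<tau> j k) (Tob V k' j) (eR V \<tau> j k')"

text \<open>Kronecker products k, k~ : T(J,J') \<otimes> T(K,K') \<rightarrow> T(J\<otimes>K, J'\<otimes>K').\<close>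
definition kron :: "('o,'m,'x) vbase_scheme \<Rightarrow> ('o,'m) vcat \<Rightarrow> ('o \<Rightarrow> 'o \<Rightarrow> 'm) \<Rightarrow> 'o \<Rightarrow> 'o \<Rightarrow> 'o \<Rightarrow> 'o \<Rightarrow> 'm" where
  "kron V T \<tau> j j' k k' =
     Cmp V (VComp T (Tob V j k) (Tob V j' k) (Tob V j' k'))
       (Cmp V (Sy V (VHom T (Tob V j k) (Tob V j' k)) (VHom T (Tob V j' k) (Tob V j' k')))
              (Tar V (rfun V T \<tau> k j j') (lfun V T \<tau> j' k k')))"

definition kron' :: "('o,'m,'x) vbase_scheme \<Rightarrow> ('o,'m) vcat \<Rightarrow> ('o \<Rightarrow> 'o \<Rightarrow> 'm) \<Rightarrow> 'o \<Rightarrow> 'o \<Rightarrow> 'o \<Rightarrow> 'o \<Rightarrow> 'm" where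
  "kron' V T \<tau> j j' k k' =
     Cmp V (VComp T (Tob V j k) (Tob V j k') (Tob V j' k'))
       (Tar V (rfun V T \<tau> k' j j') (lfun V T \<tau> j k k'))"

definition commutes :: "('o,'m,'x) vbase_scheme \<Rightarrow> 'o set \<Rightarrow> ('o,'m) vcat \<Rightarrow> ('o \<Rightarrow> 'o \<Rightarrow> 'm)
     \<Rightarrow> ('o \<Rightarrow> 'o \<Rightarrow> 'm) \<Rightarrow> ('o \<Rightarrow> 'o \<Rightarrow> 'm) \<Rightarrow> bool" where
  "commutes V Jo T \<tau> F G \<longleftrightarrow> (\<forall>j\<in>Jo. \<forall>j'\<in>Jo. \<forall>k\<in>Jo. \<forall>k'\<in>Jo.
     Cmp V (kron V T \<tau> j j' k k') (Tar V (F j j') (G k k')) =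
     Cmp V (kron' V T \<tau> j j' k k') (Tar V (F j j') (G k k')))"

end

theory Submission
  imports Defs
begin

text \<open>Everything rests on one naturality identity: for a morphism of theories \<open>A : \<T> \<rightarrow> \<U>\<close>,
  \<open>A \<circ> k = k \<circ> (A \<otimes> A)\<close> and likewise for \<open>k\<^sup>~\<close>. The Kronecker products are composites of hom-maps of
  \<open>[J,-]\<^sub>l\<close> and \<open>[J,-]\<^sub>r\<close>, which are induced by cotensors; a \<V>-functor carrying a cotensor to a
  cotensor commutes with the induced hom-maps, and \<open>A\<close> carries the counits \<open>\<tau> \<circ> Coev\<close> of \<T> to the
  counits \<open>\<upsilon> \<circ> Coev\<close> of \<U> because \<open>A \<tau> = \<upsilon>\<close>. Given the identity, (1) is the commutation equation
  postcomposed with \<open>A\<close>, and (2) cancels the monomorphism \<open>A\<^bsub>J\<otimes>K,J'\<otimes>K'\<^esub>\<close>. That \<open>J \<otimes> K\<close> is a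
  cotensor in \<open>\<J>\<^sup>o\<^sup>p\<close>, and hence in every theory, is the currying isomorphism
  \<open>[J \<otimes> K, X] \<cong> [J, [K, X]]\<close>.\<close>

locale smc = fixes V :: "('o,'m) vbase" assumes smcc: "smcc V"
begin

abbreviation comp_V (infixr "\<cdot>" 55) where "g \<cdot> f \<equiv> Cmp V g f"
abbreviation tensor_V (infixr "\<odot>" 60) where "f \<odot> g \<equiv> Tar V f g"
abbreviation id_V ("\<one>") where "\<one> X \<equiv> Idt V X"

section \<open>The base category\<close>

lemma dom_ob[simp]: "f \<in> Ar V \<Longrightarrow> Dom V f \<in> Ob V"
  and cod_ob[simp]: "f \<in> Ar V \<Longrightarrow> Cod V f \<in> Ob V"
  using smcc unfolding smcc_def by simp_all

lemma id_ar[simp]: "X \<in> Ob V \<Longrightarrow> \<one> X \<in> Ar V"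
  and id_dom[simp]: "X \<in> Ob V \<Longrightarrow> Dom V (\<one> X) = X"
  and id_cod[simp]: "X \<in> Ob V \<Longrightarrow> Cod V (\<one> X) = X"
  using smcc unfolding smcc_def hom_def by simp_all

lemma comp_ar[simp]: "f \<in> Ar V \<Longrightarrow> g \<in> Ar V \<Longrightarrow> Cod V f = Dom V g \<Longrightarrow> g \<cdot> f \<in> Ar V"
  and comp_dom[simp]: "f \<in> Ar V \<Longrightarrow> g \<in> Ar V \<Longrightarrow> Cod V f = Dom V g \<Longrightarrow> Dom V (g \<cdot> f) = Dom V f"
  and comp_cod[simp]: "f \<in> Ar V \<Longrightarrow> g \<in> Ar V \<Longrightarrow> Cod V f = Dom V g \<Longrightarrow> Cod V (g \<cdot> f) = Cod V g"
  using smcc unfolding smcc_def hom_def by simp_all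

lemma comp_id_right[simp]: "f \<in> Ar V \<Longrightarrow> X = Dom V f \<Longrightarrow> f \<cdot> \<one> X = f"
  and comp_id_left[simp]: "f \<in> Ar V \<Longrightarrow> X = Cod V f \<Longrightarrow> \<one> X \<cdot> f = f"
  using smcc unfolding smcc_def by simp_all

lemma comp_assoc[simp]: "f \<in> Ar V \<Longrightarrow> g \<in> Ar V \<Longrightarrow> h \<in> Ar V \<Longrightarrow>
    Cod V f = Dom V g \<Longrightarrow> Cod V g = Dom V h \<Longrightarrow> (h \<cdot> g) \<cdot> f = h \<cdot> (g \<cdot> f)"
  using smcc unfolding smcc_def by simp

lemma tensor_ob[simp]: "X \<in> Ob V \<Longrightarrow> Y \<in> Ob V \<Longrightarrow> Tob V X Y \<in> Ob V"
  using smcc unfolding smcc_def by simp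

lemma tensor_ar[simp]: "f \<in> Ar V \<Longrightarrow> g \<in> Ar V \<Longrightarrow> f \<odot> g \<in> Ar V"
  and tensor_dom[simp]: "f \<in> Ar V \<Longrightarrow> g \<in> Ar V \<Longrightarrow> Dom V (f \<odot> g) = Tob V (Dom V f) (Dom V g)"
  and tensor_cod[simp]: "f \<in> Ar V \<Longrightarrow> g \<in> Ar V \<Longrightarrow> Cod V (f \<odot> g) = Tob V (Cod V f) (Cod V g)"
  using smcc unfolding smcc_def hom_def by simp_all

lemma tensor_id[simp]: "X \<in> Ob V \<Longrightarrow> Y \<in> Ob V \<Longrightarrow> \<one> X \<odot> \<one> Y = \<one> (Tob V X Y)"
  using smcc unfolding smcc_def by simp

lemma interchange: "f \<in> Ar V \<Longrightarrow> g \<in> Ar V \<Longrightarrow> f' \<in> Ar V \<Longrightarrow> g' \<in> Ar V \<Longrightarrow>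
    Cod V f = Dom V g \<Longrightarrow> Cod V f' = Dom V g' \<Longrightarrow> (g \<odot> g') \<cdot> (f \<odot> f') = (g \<cdot> f) \<odot> (g' \<cdot> f')"
  using smcc unfolding smcc_def by simp

lemma asc_iso: "X \<in> Ob V \<Longrightarrow> Y \<in> Ob V \<Longrightarrow> Z \<in> Ob V \<Longrightarrow> iso_in V (Asc V X Y Z)"
  using smcc unfolding smcc_def by simp

lemma asc_ar[simp]: "X \<in> Ob V \<Longrightarrow> Y \<in> Ob V \<Longrightarrow> Z \<in> Ob V \<Longrightarrow> Asc V X Y Z \<in> Ar V"
  and asc_dom[simp]: "X \<in> Ob V \<Longrightarrow> Y \<in> Ob V \<Longrightarrow> Z \<in> Ob V \<Longrightarrow> Dom V (Asc V X Y Z) = Tob V (Tob V X Y) Z"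
  and asc_cod[simp]: "X \<in> Ob V \<Longrightarrow> Y \<in> Ob V \<Longrightarrow> Z \<in> Ob V \<Longrightarrow> Cod V (Asc V X Y Z) = Tob V X (Tob V Y Z)"
  using smcc unfolding smcc_def hom_def by simp_all

lemma asc_nat: "f \<in> Ar V \<Longrightarrow> g \<in> Ar V \<Longrightarrow> h \<in> Ar V \<Longrightarrow>
    Asc V (Cod V f) (Cod V g) (Cod V h) \<cdot> ((f \<odot> g) \<odot> h) = (f \<odot> (g \<odot> h)) \<cdot> Asc V (Dom V f) (Dom V g) (Dom V h)"
  using smcc unfolding smcc_def by simp

lemma sym_ar[simp]: "X \<in> Ob V \<Longrightarrow> Y \<in> Ob V \<Longrightarrow> Sy V X Y \<in> Ar V"
  and sym_dom[simp]: "X \<in> Ob V \<Longrightarrow> Y \<in> Ob V \<Longrightarrow> Dom V (Sy V X Y) = Tob V X Y"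
  and sym_cod[simp]: "X \<in> Ob V \<Longrightarrow> Y \<in> Ob V \<Longrightarrow> Cod V (Sy V X Y) = Tob V Y X"
  and sym_sym: "X \<in> Ob V \<Longrightarrow> Y \<in> Ob V \<Longrightarrow> Sy V Y X \<cdot> Sy V X Y = \<one> (Tob V X Y)"
  using smcc unfolding smcc_def hom_def by simp_all

lemma sym_sym_comp: "X \<in> Ob V \<Longrightarrow> Y \<in> Ob V \<Longrightarrow> f \<in> Ar V \<Longrightarrow> Cod V f = Tob V X Y \<Longrightarrow>
    Sy V Y X \<cdot> (Sy V X Y \<cdot> f) = f"
  by (simp add: sym_sym flip: comp_assoc)

lemma sym_nat: "f \<in> Ar V \<Longrightarrow> g \<in> Ar V \<Longrightarrow>
    Sy V (Cod V f) (Cod V g) \<cdot> (f \<odot> g) = (g \<odot> f) \<cdot> Sy V (Dom V f) (Dom V g)"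
  using smcc unfolding smcc_def by simp

lemma ihom_ob[simp]: "Y \<in> Ob V \<Longrightarrow> Z \<in> Ob V \<Longrightarrow> Ih V Y Z \<in> Ob V"
  using smcc unfolding smcc_def by simp

lemma ev_ar[simp]: "Y \<in> Ob V \<Longrightarrow> Z \<in> Ob V \<Longrightarrow> Ev V Y Z \<in> Ar V"
  and ev_dom[simp]: "Y \<in> Ob V \<Longrightarrow> Z \<in> Ob V \<Longrightarrow> Dom V (Ev V Y Z) = Tob V (Ih V Y Z) Y"
  and ev_cod[simp]: "Y \<in> Ob V \<Longrightarrow> Z \<in> Ob V \<Longrightarrow> Cod V (Ev V Y Z) = Z"
  using smcc unfolding smcc_def hom_def by simp_all

lemma ex1_transpose: "X \<in> Ob V \<Longrightarrow> Y \<in> Ob V \<Longrightarrow> Z \<in> Ob V \<Longrightarrow> hom V f (Tob V X Y) Z \<Longrightarrow>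
    \<exists>!h. hom V h X (Ih V Y Z) \<and> Ev V Y Z \<cdot> (h \<odot> \<one> Y) = f"
  using smcc unfolding smcc_def by simp

lemma iso_cancel_left:
  assumes "iso_in V f" "a \<in> Ar V" "b \<in> Ar V" "Cod V a = Dom V f" "Cod V b = Dom V f"
    "Dom V a = Dom V b" "f \<cdot> a = f \<cdot> b"
  shows "a = b"
proof -
  obtain g where g: "g \<in> Ar V" "Dom V g = Cod V f" "Cod V g = Dom V f" "g \<cdot> f = \<one> (Dom V f)" "f \<in> Ar V"
    using assms(1) unfolding iso_in_def hom_def by blast
  have cancel: "g \<cdot> (f \<cdot> x) = x" if "x \<in> Ar V" "Cod V x = Dom V f" for x
  proof -
    have "g \<cdot> (f \<cdot> x) = (g \<cdot> f) \<cdot> x" by (rule comp_assoc[symmetric]) (use that g in simp_all)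
    also have "\<dots> = x" by (simp only: g(4)) (use that in simp)
    finally show ?thesis .
  qed
  have "a = g \<cdot> (f \<cdot> a)" using cancel assms(2,4) by simp
  also have "\<dots> = b" using cancel assms by simp
  finally show ?thesis .
qed

lemma iso_inI: "f \<in> Ar V \<Longrightarrow> g \<in> Ar V \<Longrightarrow> Dom V g = Cod V f \<Longrightarrow> Cod V g = Dom V f \<Longrightarrow>
    g \<cdot> f = \<one> (Dom V f) \<Longrightarrow> f \<cdot> g = \<one> (Cod V f) \<Longrightarrow> iso_in V f"
  unfolding iso_in_def hom_def by blast

lemma iso_ex1_factor:
  assumes m: "iso_in V m" and r: "r \<in> Ar V" "Cod V r = Cod V m"
  shows "\<exists>!g. hom V g (Dom V r) (Dom V m) \<and> m \<cdot> g = r"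
proof -
  obtain q where q: "m \<in> Ar V" "q \<in> Ar V" "Dom V q = Cod V m" "Cod V q = Dom V m" "m \<cdot> q = \<one> (Cod V m)"
    using m unfolding iso_in_def hom_def by blast
  have "m \<cdot> (q \<cdot> r) = (m \<cdot> q) \<cdot> r" by (rule comp_assoc[symmetric]) (use q r in simp_all)
  also have "\<dots> = r" by (simp only: q(5)) (use r in simp)
  finally have qr: "hom V (q \<cdot> r) (Dom V r) (Dom V m) \<and> m \<cdot> (q \<cdot> r) = r"
    using q r unfolding hom_def by simp
  show ?thesis
  proof (rule ex1I)
    show "hom V (q \<cdot> r) (Dom V r) (Dom V m) \<and> m \<cdot> (q \<cdot> r) = r" by (fact qr)
    fix g assume "hom V g (Dom V r) (Dom V m) \<and> m \<cdot> g = r"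
    then have g: "g \<in> Ar V" "Dom V g = Dom V r" "Cod V g = Dom V m" "m \<cdot> g = r" unfolding hom_def by simp_all
    show "g = q \<cdot> r"
      by (rule iso_cancel_left[OF m]) (use g qr in \<open>simp_all add: hom_def\<close>)
  qed
qed

definition asc_inv :: "'o \<Rightarrow> 'o \<Rightarrow> 'o \<Rightarrow> 'm" where
  "asc_inv X Y Z = (SOME g. hom V g (Tob V X (Tob V Y Z)) (Tob V (Tob V X Y) Z) \<and>
     g \<cdot> Asc V X Y Z = \<one> (Tob V (Tob V X Y) Z) \<and> Asc V X Y Z \<cdot> g = \<one> (Tob V X (Tob V Y Z)))"

lemma asc_inv:
  assumes "X \<in> Ob V" "Y \<in> Ob V" "Z \<in> Ob V"
  shows "hom V (asc_inv X Y Z) (Tob V X (Tob V Y Z)) (Tob V (Tob V X Y) Z) \<and>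
    asc_inv X Y Z \<cdot> Asc V X Y Z = \<one> (Tob V (Tob V X Y) Z) \<and> Asc V X Y Z \<cdot> asc_inv X Y Z = \<one> (Tob V X (Tob V Y Z))"
  unfolding asc_inv_def
  by (rule someI_ex) (use asc_iso[OF assms] assms in \<open>simp add: iso_in_def\<close>)

lemma asc_inv_ar[simp]: "X \<in> Ob V \<Longrightarrow> Y \<in> Ob V \<Longrightarrow> Z \<in> Ob V \<Longrightarrow> asc_inv X Y Z \<in> Ar V"
  and asc_inv_dom[simp]: "X \<in> Ob V \<Longrightarrow> Y \<in> Ob V \<Longrightarrow> Z \<in> Ob V \<Longrightarrow> Dom V (asc_inv X Y Z) = Tob V X (Tob V Y Z)"
  and asc_inv_cod[simp]: "X \<in> Ob V \<Longrightarrow> Y \<in> Ob V \<Longrightarrow> Z \<in> Ob V \<Longrightarrow> Cod V (asc_inv X Y Z) = Tob V (Tob V X Y) Z"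
  and asc_inv_asc: "X \<in> Ob V \<Longrightarrow> Y \<in> Ob V \<Longrightarrow> Z \<in> Ob V \<Longrightarrow> asc_inv X Y Z \<cdot> Asc V X Y Z = \<one> (Tob V (Tob V X Y) Z)"
  and asc_asc_inv: "X \<in> Ob V \<Longrightarrow> Y \<in> Ob V \<Longrightarrow> Z \<in> Ob V \<Longrightarrow> Asc V X Y Z \<cdot> asc_inv X Y Z = \<one> (Tob V X (Tob V Y Z))"
  using asc_inv unfolding hom_def by blast+

lemma asc_asc_inv_comp: "X \<in> Ob V \<Longrightarrow> Y \<in> Ob V \<Longrightarrow> Z \<in> Ob V \<Longrightarrow> f \<in> Ar V \<Longrightarrow>
    Cod V f = Tob V X (Tob V Y Z) \<Longrightarrow> Asc V X Y Z \<cdot> (asc_inv X Y Z \<cdot> f) = f"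
  by (simp add: asc_asc_inv flip: comp_assoc)

lemma asc_inv_nat:
  assumes "f \<in> Ar V" "g \<in> Ar V" "h \<in> Ar V"
  shows "asc_inv (Cod V f) (Cod V g) (Cod V h) \<cdot> (f \<odot> (g \<odot> h)) = ((f \<odot> g) \<odot> h) \<cdot> asc_inv (Dom V f) (Dom V g) (Dom V h)"
proof -
  let ?a = "asc_inv (Cod V f) (Cod V g) (Cod V h)" and ?b = "asc_inv (Dom V f) (Dom V g) (Dom V h)"
  have "?a \<cdot> (f \<odot> (g \<odot> h)) = ?a \<cdot> ((f \<odot> (g \<odot> h)) \<cdot> (Asc V (Dom V f) (Dom V g) (Dom V h) \<cdot> ?b))"
    using assms by (simp add: asc_asc_inv)
  also have "\<dots> = ?a \<cdot> ((Asc V (Cod V f) (Cod V g) (Cod V h) \<cdot> ((f \<odot> g) \<odot> h)) \<cdot> ?b)"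
    using assms by (simp add: asc_nat)
  also have "\<dots> = (?a \<cdot> Asc V (Cod V f) (Cod V g) (Cod V h)) \<cdot> (((f \<odot> g) \<odot> h) \<cdot> ?b)"
    using assms by simp
  also have "\<dots> = ((f \<odot> g) \<odot> h) \<cdot> ?b" using assms by (simp add: asc_inv_asc)
  finally show ?thesis .
qed

section \<open>Currying\<close>

lemma cur:
  assumes "f \<in> Ar V" "Dom V f = Tob V X Y" "Cod V f = Z" "X \<in> Ob V" "Y \<in> Ob V" "Z \<in> Ob V"
  shows "hom V (cur V X Y Z f) X (Ih V Y Z) \<and> Ev V Y Z \<cdot> (cur V X Y Z f \<odot> \<one> Y) = f"
proof -
  have "\<exists>!h. hom V h X (Ih V Y Z) \<and> Ev V Y Z \<cdot> (h \<odot> \<one> Y) = f"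
    using ex1_transpose assms unfolding hom_def by blast
  then show ?thesis unfolding cur_def by (rule theI')
qed

lemma cur_ar[simp]: "f \<in> Ar V \<Longrightarrow> Dom V f = Tob V X Y \<Longrightarrow> Cod V f = Z \<Longrightarrow> X \<in> Ob V \<Longrightarrow> Y \<in> Ob V \<Longrightarrow> Z \<in> Ob V \<Longrightarrow> cur V X Y Z f \<in> Ar V"
  and cur_dom[simp]: "f \<in> Ar V \<Longrightarrow> Dom V f = Tob V X Y \<Longrightarrow> Cod V f = Z \<Longrightarrow> X \<in> Ob V \<Longrightarrow> Y \<in> Ob V \<Longrightarrow> Z \<in> Ob V \<Longrightarrow> Dom V (cur V X Y Z f) = X"
  and cur_cod[simp]: "f \<in> Ar V \<Longrightarrow> Dom V f = Tob V X Y \<Longrightarrow> Cod V f = Z \<Longrightarrow> X \<in> Ob V \<Longrightarrow> Y \<in> Ob V \<Longrightarrow> Z \<in> Ob V \<Longrightarrow> Cod V (cur V X Y Z f) = Ih V Y Z"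
  and ev_cur: "f \<in> Ar V \<Longrightarrow> Dom V f = Tob V X Y \<Longrightarrow> Cod V f = Z \<Longrightarrow> X \<in> Ob V \<Longrightarrow> Y \<in> Ob V \<Longrightarrow> Z \<in> Ob V \<Longrightarrow> Ev V Y Z \<cdot> (cur V X Y Z f \<odot> \<one> Y) = f"
  using cur unfolding hom_def by blast+

lemma cur_unique:
  assumes "h \<in> Ar V" "Dom V h = X" "Cod V h = Ih V Y Z" "Y \<in> Ob V" "Z \<in> Ob V"
    "Ev V Y Z \<cdot> (h \<odot> \<one> Y) = f"
  shows "h = cur V X Y Z f"
proof -
  have obs: "X \<in> Ob V" "f \<in> Ar V" "Dom V f = Tob V X Y" "Cod V f = Z" using assms by auto
  then have "\<exists>!h. hom V h X (Ih V Y Z) \<and> Ev V Y Z \<cdot> (h \<odot> \<one> Y) = f"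
    using ex1_transpose assms unfolding hom_def by blast
  then show ?thesis using cur[OF obs(2-4,1) assms(4,5)] assms unfolding hom_def by blast
qed

lemma ev_cancel:
  assumes "h \<in> Ar V" "h' \<in> Ar V" "Dom V h = Dom V h'" "Cod V h = Ih V Y Z" "Cod V h' = Ih V Y Z"
    "Y \<in> Ob V" "Z \<in> Ob V" "Ev V Y Z \<cdot> (h \<odot> \<one> Y) = Ev V Y Z \<cdot> (h' \<odot> \<one> Y)"
  shows "h = h'"
  using cur_unique[OF assms(1) refl assms(4,6,7) refl] cur_unique[OF assms(2) refl assms(5,6,7) refl] assms(3,8)
  by simp

lemma cur_comp:
  assumes "f \<in> Ar V" "Dom V f = Tob V X Y" "Cod V f = Z" "Y \<in> Ob V" "Z \<in> Ob V"
    "h \<in> Ar V" "Cod V h = X"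
  shows "cur V X Y Z f \<cdot> h = cur V (Dom V h) Y Z (f \<cdot> (h \<odot> \<one> Y))"
proof -
  have X: "X \<in> Ob V" using assms by auto
  have "Ev V Y Z \<cdot> ((cur V X Y Z f \<cdot> h) \<odot> \<one> Y) = (Ev V Y Z \<cdot> (cur V X Y Z f \<odot> \<one> Y)) \<cdot> (h \<odot> \<one> Y)"
    using assms X by (simp add: interchange)
  then have "Ev V Y Z \<cdot> ((cur V X Y Z f \<cdot> h) \<odot> \<one> Y) = f \<cdot> (h \<odot> \<one> Y)"
    using assms X by (simp add: ev_cur)
  then show ?thesis by (rule cur_unique[rotated -1]) (use assms X in auto)
qed

lemma comp_cur:
  assumes "f \<in> Ar V" "Dom V f = Tob V X Y" "Cod V f = Z" "X \<in> Ob V" "Y \<in> Ob V"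
    "g \<in> Ar V" "Dom V g = Z"
  shows "cur V X Y (Cod V g) (g \<cdot> f) = cur V (Ih V Y Z) Y (Cod V g) (g \<cdot> Ev V Y Z) \<cdot> cur V X Y Z f"
proof -
  have Z: "Z \<in> Ob V" using assms by auto
  have "cur V (Ih V Y Z) Y (Cod V g) (g \<cdot> Ev V Y Z) \<cdot> cur V X Y Z f
      = cur V X Y (Cod V g) ((g \<cdot> Ev V Y Z) \<cdot> (cur V X Y Z f \<odot> \<one> Y))"
    using assms Z by (simp add: cur_comp)
  also have "\<dots> = cur V X Y (Cod V g) (g \<cdot> f)"
    using assms Z by (simp add: ev_cur)
  finally show ?thesis by simp
qed

lemma uV_comp_ar[simp]: "a \<in> Ob V \<Longrightarrow> b \<in> Ob V \<Longrightarrow> c \<in> Ob V \<Longrightarrow> uV_comp V a b c \<in> Ar V"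
  and uV_comp_dom[simp]: "a \<in> Ob V \<Longrightarrow> b \<in> Ob V \<Longrightarrow> c \<in> Ob V \<Longrightarrow> Dom V (uV_comp V a b c) = Tob V (Ih V b c) (Ih V a b)"
  and uV_comp_cod[simp]: "a \<in> Ob V \<Longrightarrow> b \<in> Ob V \<Longrightarrow> c \<in> Ob V \<Longrightarrow> Cod V (uV_comp V a b c) = Ih V a c"
  and ev_uV_comp: "a \<in> Ob V \<Longrightarrow> b \<in> Ob V \<Longrightarrow> c \<in> Ob V \<Longrightarrow> Ev V a c \<cdot> (uV_comp V a b c \<odot> \<one> a) =
     Ev V b c \<cdot> ((\<one> (Ih V b c) \<odot> Ev V a b) \<cdot> Asc V (Ih V b c) (Ih V a b) a)"
  unfolding uV_comp_def by (simp_all add: ev_cur)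

section \<open>Cotensors in \<open>\<J>\<^sup>o\<^sup>p\<close>\<close>

definition uncurry2 :: "'o \<Rightarrow> 'o \<Rightarrow> 'o \<Rightarrow> 'm \<Rightarrow> 'm" where
  "uncurry2 j k X f = Ev V k X \<cdot> ((Ev V j (Ih V k X) \<cdot> (f \<odot> \<one> j)) \<odot> \<one> k)"

lemma uncurry2_ar[simp]: "f \<in> Ar V \<Longrightarrow> Cod V f = Ih V j (Ih V k X) \<Longrightarrow> j \<in> Ob V \<Longrightarrow> k \<in> Ob V \<Longrightarrow> X \<in> Ob V \<Longrightarrow>
    uncurry2 j k X f \<in> Ar V"
  and uncurry2_dom[simp]: "f \<in> Ar V \<Longrightarrow> Cod V f = Ih V j (Ih V k X) \<Longrightarrow> j \<in> Ob V \<Longrightarrow> k \<in> Ob V \<Longrightarrow> X \<in> Ob V \<Longrightarrow>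
    Dom V (uncurry2 j k X f) = Tob V (Tob V (Dom V f) j) k"
  and uncurry2_cod[simp]: "f \<in> Ar V \<Longrightarrow> Cod V f = Ih V j (Ih V k X) \<Longrightarrow> j \<in> Ob V \<Longrightarrow> k \<in> Ob V \<Longrightarrow> X \<in> Ob V \<Longrightarrow>
    Cod V (uncurry2 j k X f) = X"
  unfolding uncurry2_def by simp_all

lemma uncurry2_comp:
  assumes "f \<in> Ar V" "Cod V f = Ih V j (Ih V k X)" "j \<in> Ob V" "k \<in> Ob V" "X \<in> Ob V"
    "h \<in> Ar V" "Cod V h = Dom V f"
  shows "uncurry2 j k X (f \<cdot> h) = uncurry2 j k X f \<cdot> ((h \<odot> \<one> j) \<odot> \<one> k)"
proof -
  have "Ev V j (Ih V k X) \<cdot> ((f \<cdot> h) \<odot> \<one> j) = (Ev V j (Ih V k X) \<cdot> (f \<odot> \<one> j)) \<cdot> (h \<odot> \<one> j)"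
    using assms by (simp add: interchange)
  then have "(Ev V j (Ih V k X) \<cdot> ((f \<cdot> h) \<odot> \<one> j)) \<odot> \<one> k
      = ((Ev V j (Ih V k X) \<cdot> (f \<odot> \<one> j)) \<odot> \<one> k) \<cdot> ((h \<odot> \<one> j) \<odot> \<one> k)"
    using assms by (simp add: interchange)
  then show ?thesis unfolding uncurry2_def using assms by simp
qed

lemma uncurry2_cancel:
  assumes "f \<in> Ar V" "Cod V f = Ih V j (Ih V k X)" "f' \<in> Ar V" "Cod V f' = Ih V j (Ih V k X)"
    "Dom V f = Dom V f'" "j \<in> Ob V" "k \<in> Ob V" "X \<in> Ob V" "uncurry2 j k X f = uncurry2 j k X f'"
  shows "f = f'"
proof -
  have "Ev V j (Ih V k X) \<cdot> (f \<odot> \<one> j) = Ev V j (Ih V k X) \<cdot> (f' \<odot> \<one> j)"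
    by (rule ev_cancel[of _ _ k X]) (use assms in \<open>auto simp: uncurry2_def\<close>)
  then show ?thesis by (rule ev_cancel[rotated -1]) (use assms in auto)
qed

text \<open>In \<open>jop V Jo\<close> the comparison map of a counit \<open>cur s\<close> with \<open>s : j \<otimes> k \<rightarrow> c\<close> an isomorphism
  is, up to currying twice, precomposition with \<open>s\<close>; its inverse is precomposition with \<open>s\<^sup>-\<^sup>1\<close>.\<close>

definition jop_comparison_inv :: "'o \<Rightarrow> 'o \<Rightarrow> 'o \<Rightarrow> 'o \<Rightarrow> 'm \<Rightarrow> 'm" where
  "jop_comparison_inv j k c X si = cur V (Ih V j (Ih V k X)) c X
     (uncurry2 j k X (\<one> (Ih V j (Ih V k X))) \<cdot> (asc_inv (Ih V j (Ih V k X)) j k \<cdot> (\<one> (Ih V j (Ih V k X)) \<odot> si)))"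

lemma uncurry2_jop_comparison:
  assumes ob: "j \<in> Ob V" "k \<in> Ob V" "c \<in> Ob V" "X \<in> Ob V"
    and s: "s \<in> Ar V" "Dom V s = Tob V j k" "Cod V s = c"
  defines "M \<equiv> Ih V c X"
  shows "uncurry2 j k X (cur V M j (Ih V k X) (uV_comp V k c X \<cdot> (\<one> M \<odot> cur V j k c s)))
    = Ev V c X \<cdot> ((\<one> M \<odot> s) \<cdot> Asc V M j k)"
proof -
  define e where "e = cur V j k c s"
  have [simp]: "M \<in> Ob V" "e \<in> Ar V" "Dom V e = j" "Cod V e = Ih V k c"
    unfolding M_def e_def using ob s by auto
  have ev_e: "Ev V k c \<cdot> (e \<odot> \<one> k) = s" unfolding e_def using ob s by (simp add: ev_cur)
  have "uncurry2 j k X (cur V M j (Ih V k X) (uV_comp V k c X \<cdot> (\<one> M \<odot> e)))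
      = (Ev V k X \<cdot> (uV_comp V k c X \<odot> \<one> k)) \<cdot> ((\<one> M \<odot> e) \<odot> \<one> k)"
    unfolding uncurry2_def using ob by (simp add: ev_cur interchange M_def)
  also have "\<dots> = Ev V c X \<cdot> ((\<one> M \<odot> Ev V k c) \<cdot> (Asc V M (Ih V k c) k \<cdot> ((\<one> M \<odot> e) \<odot> \<one> k)))"
    using ob by (simp add: ev_uV_comp M_def)
  also have "Asc V M (Ih V k c) k \<cdot> ((\<one> M \<odot> e) \<odot> \<one> k) = (\<one> M \<odot> (e \<odot> \<one> k)) \<cdot> Asc V M j k"
    using asc_nat[of "\<one> M" e "\<one> k"] ob by simp
  also have "(\<one> M \<odot> Ev V k c) \<cdot> ((\<one> M \<odot> (e \<odot> \<one> k)) \<cdot> Asc V M j k) = (\<one> M \<odot> s) \<cdot> Asc V M j k"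
    using ob by (simp add: interchange ev_e flip: comp_assoc)
  finally show ?thesis unfolding e_def .
qed

lemma jop_comparison_inv:
  assumes ob: "j \<in> Ob V" "k \<in> Ob V" "c \<in> Ob V" "X \<in> Ob V"
    and si: "si \<in> Ar V" "Dom V si = c" "Cod V si = Tob V j k"
  defines "N \<equiv> Ih V j (Ih V k X)"
  shows "jop_comparison_inv j k c X si \<in> Ar V" "Dom V (jop_comparison_inv j k c X si) = N"
    "Cod V (jop_comparison_inv j k c X si) = Ih V c X"
    "Ev V c X \<cdot> (jop_comparison_inv j k c X si \<odot> \<one> c) = uncurry2 j k X (\<one> N) \<cdot> (asc_inv N j k \<cdot> (\<one> N \<odot> si))"
  unfolding jop_comparison_inv_def N_def using ob si by (simp_all add: ev_cur)

lemma jop_comparison_inv_left: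
  assumes ob: "j \<in> Ob V" "k \<in> Ob V" "c \<in> Ob V" "X \<in> Ob V"
    and s: "s \<in> Ar V" "Dom V s = Tob V j k" "Cod V s = c"
    and si: "si \<in> Ar V" "Dom V si = c" "Cod V si = Tob V j k" "s \<cdot> si = \<one> c"
  defines "M \<equiv> Ih V c X"
  defines "\<phi> \<equiv> cur V M j (Ih V k X) (uV_comp V k c X \<cdot> (\<one> M \<odot> cur V j k c s))"
  shows "jop_comparison_inv j k c X si \<cdot> \<phi> = \<one> M"
proof -
  define N where "N = Ih V j (Ih V k X)"
  define \<psi> where "\<psi> = jop_comparison_inv j k c X si"
  note \<psi> = jop_comparison_inv[OF ob si(1-3), folded N_def M_def \<psi>_def]
  have [simp]: "Ih V c X = M" "Ih V j (Ih V k X) = N" "M \<in> Ob V" "N \<in> Ob V"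
      "\<phi> \<in> Ar V" "Dom V \<phi> = M" "Cod V \<phi> = N"
    unfolding M_def N_def \<phi>_def using ob s by auto
  have uncurry2_\<phi>: "uncurry2 j k X \<phi> = Ev V c X \<cdot> ((\<one> M \<odot> s) \<cdot> Asc V M j k)"
    unfolding \<phi>_def M_def by (rule uncurry2_jop_comparison[OF ob s])
  have "Ev V c X \<cdot> ((\<psi> \<cdot> \<phi>) \<odot> \<one> c) = (Ev V c X \<cdot> (\<psi> \<odot> \<one> c)) \<cdot> (\<phi> \<odot> \<one> c)"
    using ob \<psi>(1-3) by (simp add: interchange)
  also have "\<dots> = uncurry2 j k X (\<one> N) \<cdot> (asc_inv N j k \<cdot> ((\<one> N \<odot> si) \<cdot> (\<phi> \<odot> \<one> c)))"
    using ob si \<psi> by simp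
  also have "(\<one> N \<odot> si) \<cdot> (\<phi> \<odot> \<one> c) = (\<phi> \<odot> (\<one> j \<odot> \<one> k)) \<cdot> (\<one> M \<odot> si)"
    using ob si by (simp add: interchange)
  also have "asc_inv N j k \<cdot> ((\<phi> \<odot> (\<one> j \<odot> \<one> k)) \<cdot> (\<one> M \<odot> si)) = ((\<phi> \<odot> \<one> j) \<odot> \<one> k) \<cdot> (asc_inv M j k \<cdot> (\<one> M \<odot> si))"
    using asc_inv_nat[of \<phi> "\<one> j" "\<one> k"] ob si by (simp flip: comp_assoc)
  also have "uncurry2 j k X (\<one> N) \<cdot> (((\<phi> \<odot> \<one> j) \<odot> \<one> k) \<cdot> (asc_inv M j k \<cdot> (\<one> M \<odot> si)))
      = uncurry2 j k X \<phi> \<cdot> (asc_inv M j k \<cdot> (\<one> M \<odot> si))"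
    using uncurry2_comp[of "\<one> N" j k X \<phi>] ob si by (simp flip: comp_assoc)
  also have "\<dots> = Ev V c X \<cdot> ((\<one> M \<odot> s) \<cdot> (\<one> M \<odot> si))"
    using ob s si by (simp add: uncurry2_\<phi> asc_asc_inv_comp)
  also have "\<dots> = Ev V c X \<cdot> (\<one> M \<odot> \<one> c)"
    using ob s si by (simp add: interchange)
  finally have "Ev V c X \<cdot> ((\<psi> \<cdot> \<phi>) \<odot> \<one> c) = Ev V c X \<cdot> (\<one> M \<odot> \<one> c)" .
  then show ?thesis unfolding \<psi>_def[symmetric] by (rule ev_cancel[rotated -1]) (use ob \<psi> in auto)
qed

lemma jop_comparison_inv_right:
  assumes ob: "j \<in> Ob V" "k \<in> Ob V" "c \<in> Ob V" "X \<in> Ob V"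
    and s: "s \<in> Ar V" "Dom V s = Tob V j k" "Cod V s = c"
    and si: "si \<in> Ar V" "Dom V si = c" "Cod V si = Tob V j k" "si \<cdot> s = \<one> (Tob V j k)"
  defines "M \<equiv> Ih V c X"
  defines "\<phi> \<equiv> cur V M j (Ih V k X) (uV_comp V k c X \<cdot> (\<one> M \<odot> cur V j k c s))"
  shows "\<phi> \<cdot> jop_comparison_inv j k c X si = \<one> (Ih V j (Ih V k X))"
proof -
  define N where "N = Ih V j (Ih V k X)"
  define \<psi> where "\<psi> = jop_comparison_inv j k c X si"
  note \<psi> = jop_comparison_inv[OF ob si(1-3), folded N_def M_def \<psi>_def]
  have [simp]: "Ih V c X = M" "Ih V j (Ih V k X) = N" "M \<in> Ob V" "N \<in> Ob V"
      "\<phi> \<in> Ar V" "Dom V \<phi> = M" "Cod V \<phi> = N"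
    unfolding M_def N_def \<phi>_def using ob s by auto
  have uncurry2_\<phi>: "uncurry2 j k X \<phi> = Ev V c X \<cdot> ((\<one> M \<odot> s) \<cdot> Asc V M j k)"
    unfolding \<phi>_def M_def by (rule uncurry2_jop_comparison[OF ob s])
  have "uncurry2 j k X (\<phi> \<cdot> \<psi>) = uncurry2 j k X \<phi> \<cdot> ((\<psi> \<odot> \<one> j) \<odot> \<one> k)"
    using uncurry2_comp[of \<phi> j k X \<psi>] ob \<psi>(1-3) by simp
  also have "\<dots> = Ev V c X \<cdot> ((\<one> M \<odot> s) \<cdot> (Asc V M j k \<cdot> ((\<psi> \<odot> \<one> j) \<odot> \<one> k)))"
    using ob s \<psi>(1-3) by (simp add: uncurry2_\<phi>)
  also have "Asc V M j k \<cdot> ((\<psi> \<odot> \<one> j) \<odot> \<one> k) = (\<psi> \<odot> \<one> (Tob V j k)) \<cdot> Asc V N j k"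
    using asc_nat[of \<psi> "\<one> j" "\<one> k"] ob \<psi>(1-3) by simp
  also have "(\<one> M \<odot> s) \<cdot> ((\<psi> \<odot> \<one> (Tob V j k)) \<cdot> Asc V N j k) = (\<psi> \<odot> \<one> c) \<cdot> ((\<one> N \<odot> s) \<cdot> Asc V N j k)"
  proof -
    have "(\<one> M \<odot> s) \<cdot> (\<psi> \<odot> \<one> (Tob V j k)) = (\<psi> \<odot> \<one> c) \<cdot> (\<one> N \<odot> s)"
      using ob s \<psi>(1-3) by (simp add: interchange)
    then show ?thesis using ob s \<psi>(1-3) by (simp flip: comp_assoc)
  qed
  also have "Ev V c X \<cdot> ((\<psi> \<odot> \<one> c) \<cdot> ((\<one> N \<odot> s) \<cdot> Asc V N j k))
      = uncurry2 j k X (\<one> N) \<cdot> (asc_inv N j k \<cdot> (((\<one> N \<odot> si) \<cdot> (\<one> N \<odot> s)) \<cdot> Asc V N j k))"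
    using ob s si \<psi> by (simp flip: comp_assoc)
  also have "\<dots> = uncurry2 j k X (\<one> N)"
    using ob s si by (simp add: interchange asc_inv_asc)
  finally show ?thesis unfolding \<psi>_def[symmetric] N_def[symmetric]
    by (rule uncurry2_cancel[rotated -1]) (use ob \<psi> in auto)
qed

lemma cmpar_jop:
  assumes "X \<in> Ob V" "k \<in> Ob V" "c \<in> Ob V" "e \<in> Ar V" "Cod V e = Ih V k c"
  shows "cmpar V (jop V Jo) (Dom V e) k c e X = cur V (Ih V c X) (Dom V e) (Ih V k X) (uV_comp V k c X \<cdot> (\<one> (Ih V c X) \<odot> e))"
proof -
  have "(uV_comp V k c X \<cdot> Sy V (Ih V k c) (Ih V c X)) \<cdot> (Sy V (Ih V c X) (Ih V k c) \<cdot> (\<one> (Ih V c X) \<odot> e))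
      = uV_comp V k c X \<cdot> (\<one> (Ih V c X) \<odot> e)"
    using assms by (simp add: sym_sym_comp)
  then show ?thesis unfolding cmpar_def jop_def by simp
qed

lemma jop_cotensor_of_iso:
  assumes J: "Jo \<subseteq> Ob V" and jkc: "j \<in> Ob V" "k \<in> Jo" "c \<in> Jo"
    and s: "s \<in> Ar V" "Dom V s = Tob V j k" "Cod V s = c"
    and si: "si \<in> Ar V" "Dom V si = c" "Cod V si = Tob V j k" "si \<cdot> s = \<one> (Tob V j k)" "s \<cdot> si = \<one> c"
  shows "is_cotensor V (jop V Jo) j k c (cur V j k c s)"
  unfolding is_cotensor_def
proof (intro conjI ballI)
  have ob: "k \<in> Ob V" "c \<in> Ob V" using J jkc by auto
  show "j \<in> Ob V" "k \<in> VOb (jop V Jo)" "c \<in> VOb (jop V Jo)" using jkc by (auto simp: jop_def)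
  show "hom V (cur V j k c s) j (VHom (jop V Jo) c k)" using ob jkc s unfolding hom_def jop_def by auto
  fix X assume "X \<in> VOb (jop V Jo)"
  then have X: "X \<in> Ob V" using J by (auto simp: jop_def)
  show "iso_in V (cmpar V (jop V Jo) j k c (cur V j k c s) X)"
    using cmpar_jop[of X k c "cur V j k c s" Jo] ob X jkc s
      jop_comparison_inv_left[OF jkc(1) ob X s si(1-3,5)] jop_comparison_inv_right[OF jkc(1) ob X s si(1-4)]
      jop_comparison_inv[OF jkc(1) ob X si(1-3)]
    by (intro iso_inI[where g = "jop_comparison_inv j k c X si"]) simp_all
qed

lemma jop_cotensor_coev: "Jo \<subseteq> Ob V \<Longrightarrow> j \<in> Jo \<Longrightarrow> k \<in> Jo \<Longrightarrow> Tob V j k \<in> Jo \<Longrightarrow>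
    is_cotensor V (jop V Jo) j k (Tob V j k) (coev V j k)"
  unfolding coev_def by (rule jop_cotensor_of_iso[where si="\<one> (Tob V j k)"]) (auto dest: subsetD)

lemma jop_cotensor_coev':
  assumes "Jo \<subseteq> Ob V" "j \<in> Jo" "k \<in> Jo" "Tob V k j \<in> Jo"
  shows "is_cotensor V (jop V Jo) j k (Tob V k j) (coev' V j k)"
proof -
  have "j \<in> Ob V" "k \<in> Ob V" using assms by auto
  then show ?thesis unfolding coev'_def
    by (intro jop_cotensor_of_iso[where si="Sy V k j"]) (use assms in \<open>simp_all add: sym_sym\<close>)
qed

section \<open>Hom-maps induced by cotensors\<close>

lemma vhom_ob[simp]: "is_vcat V T \<Longrightarrow> a \<in> VOb T \<Longrightarrow> b \<in> VOb T \<Longrightarrow> VHom T a b \<in> Ob V"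
  unfolding is_vcat_def by blast

lemma vcomp_ar[simp]: "is_vcat V T \<Longrightarrow> a \<in> VOb T \<Longrightarrow> b \<in> VOb T \<Longrightarrow> c \<in> VOb T \<Longrightarrow> VComp T a b c \<in> Ar V"
  and vcomp_dom[simp]: "is_vcat V T \<Longrightarrow> a \<in> VOb T \<Longrightarrow> b \<in> VOb T \<Longrightarrow> c \<in> VOb T \<Longrightarrow> Dom V (VComp T a b c) = Tob V (VHom T b c) (VHom T a b)"
  and vcomp_cod[simp]: "is_vcat V T \<Longrightarrow> a \<in> VOb T \<Longrightarrow> b \<in> VOb T \<Longrightarrow> c \<in> VOb T \<Longrightarrow> Cod V (VComp T a b c) = VHom T a c"
  unfolding is_vcat_def hom_def by blast+

lemma vfun_ar[simp]: "vfun V C D F \<Longrightarrow> a \<in> VOb C \<Longrightarrow> b \<in> VOb C \<Longrightarrow> F a b \<in> Ar V"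
  and vfun_dom[simp]: "vfun V C D F \<Longrightarrow> a \<in> VOb C \<Longrightarrow> b \<in> VOb C \<Longrightarrow> Dom V (F a b) = VHom C a b"
  and vfun_cod[simp]: "vfun V C D F \<Longrightarrow> a \<in> VOb C \<Longrightarrow> b \<in> VOb C \<Longrightarrow> Cod V (F a b) = VHom D a b"
  and vfun_comp: "vfun V C D F \<Longrightarrow> a \<in> VOb C \<Longrightarrow> b \<in> VOb C \<Longrightarrow> c \<in> VOb C \<Longrightarrow>
     F a c \<cdot> VComp C a b c = VComp D a b c \<cdot> (F b c \<odot> F a b)"
  and vfun_ob: "vfun V C D F \<Longrightarrow> VOb C = VOb D"
  unfolding vfun_def hom_def by blast+

lemma cmpar_ar[simp]: "is_vcat V T \<Longrightarrow> X \<in> VOb T \<Longrightarrow> c \<in> VOb T \<Longrightarrow> c0 \<in> VOb T \<Longrightarrow> v \<in> Ob V \<Longrightarrow>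
    e \<in> Ar V \<Longrightarrow> Dom V e = v \<Longrightarrow> Cod V e = VHom T c c0 \<Longrightarrow> cmpar V T v c0 c e X \<in> Ar V"
  and cmpar_dom[simp]: "is_vcat V T \<Longrightarrow> X \<in> VOb T \<Longrightarrow> c \<in> VOb T \<Longrightarrow> c0 \<in> VOb T \<Longrightarrow> v \<in> Ob V \<Longrightarrow>
    e \<in> Ar V \<Longrightarrow> Dom V e = v \<Longrightarrow> Cod V e = VHom T c c0 \<Longrightarrow> Dom V (cmpar V T v c0 c e X) = VHom T X c"
  and cmpar_cod[simp]: "is_vcat V T \<Longrightarrow> X \<in> VOb T \<Longrightarrow> c \<in> VOb T \<Longrightarrow> c0 \<in> VOb T \<Longrightarrow> v \<in> Ob V \<Longrightarrow>
    e \<in> Ar V \<Longrightarrow> Dom V e = v \<Longrightarrow> Cod V e = VHom T c c0 \<Longrightarrow> Cod V (cmpar V T v c0 c e X) = Ih V v (VHom T X c0)"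
  unfolding cmpar_def by simp_all

lemma cotensor_counit: "is_cotensor V T v c0 c e \<Longrightarrow> e \<in> Ar V \<and> Dom V e = v \<and> Cod V e = VHom T c c0 \<and> v \<in> Ob V \<and> c0 \<in> VOb T \<and> c \<in> VOb T"
  unfolding is_cotensor_def hom_def by blast

lemma indmap:
  assumes T: "is_vcat V T" and cot: "is_cotensor V T v K' c' e'"
    and K: "K \<in> VOb T" "c \<in> VOb T" and e: "e \<in> Ar V" "Dom V e = v" "Cod V e = VHom T c K"
  shows "hom V (indmap V T v K K' c e c' e') (VHom T K K') (VHom T c c') \<and>
    cmpar V T v K' c' e' c \<cdot> indmap V T v K K' c e c' e' =
    cur V (VHom T K K') v (VHom T c K') (VComp T c K K' \<cdot> (\<one> (VHom T K K') \<odot> e))"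
proof -
  have iso: "iso_in V (cmpar V T v K' c' e' c)" using cot K unfolding is_cotensor_def by blast
  then have "\<exists>!g. hom V g (VHom T K K') (VHom T c c') \<and> cmpar V T v K' c' e' c \<cdot> g =
      cur V (VHom T K K') v (VHom T c K') (VComp T c K K' \<cdot> (\<one> (VHom T K K') \<odot> e))"
    using iso_ex1_factor[OF iso, of "cur V (VHom T K K') v (VHom T c K') (VComp T c K K' \<cdot> (\<one> (VHom T K K') \<odot> e))"]
      cotensor_counit[OF cot] T K e by simp
  then show ?thesis unfolding indmap_def by (rule theI')
qed

lemma indmap_ar[simp]: "is_vcat V T \<Longrightarrow> is_cotensor V T v K' c' e' \<Longrightarrow> K \<in> VOb T \<Longrightarrow> c \<in> VOb T \<Longrightarrow>
    e \<in> Ar V \<Longrightarrow> Dom V e = v \<Longrightarrow> Cod V e = VHom T c K \<Longrightarrow> indmap V T v K K' c e c' e' \<in> Ar V"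
  and indmap_dom[simp]: "is_vcat V T \<Longrightarrow> is_cotensor V T v K' c' e' \<Longrightarrow> K \<in> VOb T \<Longrightarrow> c \<in> VOb T \<Longrightarrow>
    e \<in> Ar V \<Longrightarrow> Dom V e = v \<Longrightarrow> Cod V e = VHom T c K \<Longrightarrow> Dom V (indmap V T v K K' c e c' e') = VHom T K K'"
  and indmap_cod[simp]: "is_vcat V T \<Longrightarrow> is_cotensor V T v K' c' e' \<Longrightarrow> K \<in> VOb T \<Longrightarrow> c \<in> VOb T \<Longrightarrow>
    e \<in> Ar V \<Longrightarrow> Dom V e = v \<Longrightarrow> Cod V e = VHom T c K \<Longrightarrow> Cod V (indmap V T v K K' c e c' e') = VHom T c c'"
  and cmpar_indmap: "is_vcat V T \<Longrightarrow> is_cotensor V T v K' c' e' \<Longrightarrow> K \<in> VOb T \<Longrightarrow> c \<in> VOb T \<Longrightarrow>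
    e \<in> Ar V \<Longrightarrow> Dom V e = v \<Longrightarrow> Cod V e = VHom T c K \<Longrightarrow> cmpar V T v K' c' e' c \<cdot> indmap V T v K K' c e c' e' =
    cur V (VHom T K K') v (VHom T c K') (VComp T c K K' \<cdot> (\<one> (VHom T K K') \<odot> e))"
  using indmap unfolding hom_def by blast+

lemma cmpar_vfun:
  assumes T: "is_vcat V T" and U: "is_vcat V U" and F: "vfun V T U F"
    and ob: "X \<in> VOb T" "c' \<in> VOb T" "K' \<in> VOb T" "v \<in> Ob V"
    and e: "e' \<in> Ar V" "Dom V e' = v" "Cod V e' = VHom T c' K'"
  shows "cmpar V U v K' c' (F c' K' \<cdot> e') X \<cdot> F X c' =
    cur V (Ih V v (VHom T X K')) v (VHom U X K') (F X K' \<cdot> Ev V v (VHom T X K')) \<cdot> cmpar V T v K' c' e' X"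
proof -
  have obU: "X \<in> VOb U" "c' \<in> VOb U" "K' \<in> VOb U" using ob vfun_ob[OF F] by auto
  note simps = T U F ob obU e
  have a: "(\<one> (VHom U X c') \<odot> (F c' K' \<cdot> e')) \<cdot> (F X c' \<odot> \<one> v) = (F X c' \<odot> F c' K') \<cdot> (\<one> (VHom T X c') \<odot> e')"
    using simps by (simp add: interchange)
  have b: "Sy V (VHom U X c') (VHom U c' K') \<cdot> (F X c' \<odot> F c' K') = (F c' K' \<odot> F X c') \<cdot> Sy V (VHom T X c') (VHom T c' K')"
    using sym_nat[of "F X c'" "F c' K'"] simps by simp
  have c: "VComp U X c' K' \<cdot> (F c' K' \<odot> F X c') = F X K' \<cdot> VComp T X c' K'"
    using vfun_comp[OF F ob(1,2,3)] by simp
  have "(VComp U X c' K' \<cdot> (Sy V (VHom U X c') (VHom U c' K') \<cdot> (\<one> (VHom U X c') \<odot> (F c' K' \<cdot> e')))) \<cdot> (F X c' \<odot> \<one> v)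
      = VComp U X c' K' \<cdot> (Sy V (VHom U X c') (VHom U c' K') \<cdot> ((\<one> (VHom U X c') \<odot> (F c' K' \<cdot> e')) \<cdot> (F X c' \<odot> \<one> v)))"
    using simps by simp
  also have "\<dots> = VComp U X c' K' \<cdot> ((Sy V (VHom U X c') (VHom U c' K') \<cdot> (F X c' \<odot> F c' K')) \<cdot> (\<one> (VHom T X c') \<odot> e'))"
    unfolding a using simps by simp
  also have "\<dots> = (VComp U X c' K' \<cdot> (F c' K' \<odot> F X c')) \<cdot> (Sy V (VHom T X c') (VHom T c' K') \<cdot> (\<one> (VHom T X c') \<odot> e'))"
    unfolding b using simps by simp
  also have "\<dots> = F X K' \<cdot> (VComp T X c' K' \<cdot> (Sy V (VHom T X c') (VHom T c' K') \<cdot> (\<one> (VHom T X c') \<odot> e')))"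
    unfolding c using simps by simp
  finally have inner: "(VComp U X c' K' \<cdot> (Sy V (VHom U X c') (VHom U c' K') \<cdot> (\<one> (VHom U X c') \<odot> (F c' K' \<cdot> e')))) \<cdot> (F X c' \<odot> \<one> v)
      = F X K' \<cdot> (VComp T X c' K' \<cdot> (Sy V (VHom T X c') (VHom T c' K') \<cdot> (\<one> (VHom T X c') \<odot> e')))" .
  have "cmpar V U v K' c' (F c' K' \<cdot> e') X \<cdot> F X c' =
     cur V (VHom T X c') v (VHom U X K') ((VComp U X c' K' \<cdot> (Sy V (VHom U X c') (VHom U c' K') \<cdot> (\<one> (VHom U X c') \<odot> (F c' K' \<cdot> e')))) \<cdot> (F X c' \<odot> \<one> v))"
    unfolding cmpar_def using simps by (subst cur_comp) simp_all
  also have "\<dots> = cur V (VHom T X c') v (Cod V (F X K')) (F X K' \<cdot> (VComp T X c' K' \<cdot> (Sy V (VHom T X c') (VHom T c' K') \<cdot> (\<one> (VHom T X c') \<odot> e'))))"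
    unfolding inner using simps by simp
  also have "\<dots> = cur V (Ih V v (VHom T X K')) v (Cod V (F X K')) (F X K' \<cdot> Ev V v (VHom T X K')) \<cdot> cmpar V T v K' c' e' X"
    unfolding cmpar_def using simps by (subst comp_cur) simp_all
  finally show ?thesis using simps by simp
qed

lemma vfun_indmap:
  assumes T: "is_vcat V T" and U: "is_vcat V U" and F: "vfun V T U F"
    and cotT: "is_cotensor V T v K' c' e'" and cotU: "is_cotensor V U v K' c' (F c' K' \<cdot> e')"
    and K: "K \<in> VOb T" "c \<in> VOb T" and e: "e \<in> Ar V" "Dom V e = v" "Cod V e = VHom T c K"
  shows "F c c' \<cdot> indmap V T v K K' c e c' e' = indmap V U v K K' c (F c K \<cdot> e) c' (F c' K' \<cdot> e') \<cdot> F K K'"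
proof -
  have ce: "e' \<in> Ar V" "Dom V e' = v" "Cod V e' = VHom T c' K'" "v \<in> Ob V" "K' \<in> VOb T" "c' \<in> VOb T"
    using cotensor_counit[OF cotT] by auto
  have obU: "K \<in> VOb U" "c \<in> VOb U" "c' \<in> VOb U" "K' \<in> VOb U" using K ce vfun_ob[OF F] by auto
  note simps = T U F K e ce obU
  have fe: "F c K \<cdot> e \<in> Ar V" "Dom V (F c K \<cdot> e) = v" "Cod V (F c K \<cdot> e) = VHom U c K" using simps by simp_all
  note indmap_T = indmap_ar[OF T cotT K e] indmap_dom[OF T cotT K e] indmap_cod[OF T cotT K e]
    cmpar_indmap[OF T cotT K e]
  note indmap_U = indmap_ar[OF U cotU obU(1,2) fe] indmap_dom[OF U cotU obU(1,2) fe]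
    indmap_cod[OF U cotU obU(1,2) fe] cmpar_indmap[OF U cotU obU(1,2) fe]
  \<comment> \<open>Both sides are determined by their composite with the comparison isomorphism in \<open>U\<close>.\<close>
  have iso: "iso_in V (cmpar V U v K' c' (F c' K' \<cdot> e') c)" using cotU obU unfolding is_cotensor_def by blast
  let ?mU = "cmpar V U v K' c' (F c' K' \<cdot> e') c" and ?mT = "cmpar V T v K' c' e' c"
  let ?gT = "indmap V T v K K' c e c' e'" and ?gU = "indmap V U v K K' c (F c K \<cdot> e) c' (F c' K' \<cdot> e')"
  let ?post = "cur V (Ih V v (VHom T c K')) v (VHom U c K') (F c K' \<cdot> Ev V v (VHom T c K'))"
  have cmpar_F: "?mU \<cdot> F c c' = ?post \<cdot> ?mT" using cmpar_vfun[OF T U F K(2) ce(6,5,4) ce(1,2,3)] .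
  have "?mU \<cdot> (F c c' \<cdot> ?gT) = (?mU \<cdot> F c c') \<cdot> ?gT" using simps indmap_T by simp
  also have "\<dots> = ?post \<cdot> (?mT \<cdot> ?gT)" unfolding cmpar_F using simps indmap_T by simp
  also have "\<dots> = cur V (VHom T K K') v (Cod V (F c K')) (F c K' \<cdot> (VComp T c K K' \<cdot> (\<one> (VHom T K K') \<odot> e)))"
    unfolding indmap_T(4) using simps by (subst comp_cur) simp_all
  also have "F c K' \<cdot> (VComp T c K K' \<cdot> (\<one> (VHom T K K') \<odot> e)) = (F c K' \<cdot> VComp T c K K') \<cdot> (\<one> (VHom T K K') \<odot> e)"
    using simps by simp
  also have "\<dots> = VComp U c K K' \<cdot> ((F K K' \<odot> F c K) \<cdot> (\<one> (VHom T K K') \<odot> e))"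
    unfolding vfun_comp[OF F K(2,1) ce(5)] using simps by simp
  also have "(F K K' \<odot> F c K) \<cdot> (\<one> (VHom T K K') \<odot> e) = (\<one> (VHom U K K') \<odot> (F c K \<cdot> e)) \<cdot> (F K K' \<odot> \<one> v)"
    using simps by (simp add: interchange)
  also have "cur V (VHom T K K') v (Cod V (F c K')) (VComp U c K K' \<cdot> ((\<one> (VHom U K K') \<odot> (F c K \<cdot> e)) \<cdot> (F K K' \<odot> \<one> v)))
     = cur V (VHom U K K') v (VHom U c K') (VComp U c K K' \<cdot> (\<one> (VHom U K K') \<odot> (F c K \<cdot> e))) \<cdot> F K K'"
    using simps by (subst cur_comp) simp_all
  also have "\<dots> = (?mU \<cdot> ?gU) \<cdot> F K K'" by (simp only: indmap_U(4))
  also have "\<dots> = ?mU \<cdot> (?gU \<cdot> F K K')" by (rule comp_assoc) (use simps indmap_U in simp_all)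
  finally have eq: "?mU \<cdot> (F c c' \<cdot> ?gT) = ?mU \<cdot> (?gU \<cdot> F K K')" .
  show ?thesis by (rule iso_cancel_left[OF iso]) (use simps indmap_T indmap_U eq in simp_all)
qed

section \<open>Theories and Kronecker products\<close>

lemma Jtheory_vcat: "Jtheory V Jo T \<tau> \<Longrightarrow> is_vcat V T"
  and Jtheory_VOb: "Jtheory V Jo T \<tau> \<Longrightarrow> VOb T = Jo"
  and Jtheory_vfun: "Jtheory V Jo T \<tau> \<Longrightarrow> vfun V (jop V Jo) T \<tau>"
  unfolding Jtheory_def by blast+

lemma Jtheory_cotensor: "Jtheory V Jo T \<tau> \<Longrightarrow> j \<in> Jo \<Longrightarrow> k \<in> Jo \<Longrightarrow> c \<in> Jo \<Longrightarrow>
    is_cotensor V (jop V Jo) j k c e \<Longrightarrow> is_cotensor V T j k c (\<tau> c k \<cdot> e)"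
  unfolding Jtheory_def by blast

lemma arity_system_tensor: "arity_system V Jo \<Longrightarrow> j \<in> Jo \<Longrightarrow> k \<in> Jo \<Longrightarrow> Tob V j k \<in> Jo"
  unfolding arity_system_def by blast

lemma Jtheory_tau_ar: "Jtheory V Jo T \<tau> \<Longrightarrow> a \<in> Jo \<Longrightarrow> b \<in> Jo \<Longrightarrow> \<tau> a b \<in> Ar V"
  and Jtheory_tau_dom: "Jtheory V Jo T \<tau> \<Longrightarrow> a \<in> Jo \<Longrightarrow> b \<in> Jo \<Longrightarrow> Dom V (\<tau> a b) = Ih V b a"
  and Jtheory_tau_cod: "Jtheory V Jo T \<tau> \<Longrightarrow> a \<in> Jo \<Longrightarrow> b \<in> Jo \<Longrightarrow> Cod V (\<tau> a b) = VHom T a b"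
  using vfun_ar vfun_dom vfun_cod Jtheory_vfun by (fastforce simp: jop_def)+

lemma theory_mor_vfun: "theory_mor V Jo T \<tau> U \<upsilon> A \<Longrightarrow> vfun V T U A"
  unfolding theory_mor_def by blast

lemma theory_mor_comp_tau:
  assumes A: "theory_mor V Jo T \<tau> U \<upsilon> A" and T: "Jtheory V Jo T \<tau>" and ck: "c \<in> Jo" "k \<in> Jo"
    and x: "x \<in> Ar V" "Cod V x = Ih V k c"
  shows "A c k \<cdot> (\<tau> c k \<cdot> x) = \<upsilon> c k \<cdot> x"
proof -
  have "A c k \<cdot> (\<tau> c k \<cdot> x) = (A c k \<cdot> \<tau> c k) \<cdot> x"
    using Jtheory_tau_ar[OF T ck] Jtheory_tau_dom[OF T ck] Jtheory_tau_cod[OF T ck] x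
      theory_mor_vfun[OF A] ck Jtheory_VOb[OF T] by simp
  then show ?thesis using A ck unfolding theory_mor_def by simp
qed

lemma theory_mor_indmap:
  assumes T: "Jtheory V Jo T \<tau>" and U: "Jtheory V Jo U \<upsilon>" and A: "theory_mor V Jo T \<tau> U \<upsilon> A"
    and ob: "K \<in> Jo" "K' \<in> Jo" "c \<in> Jo" "c' \<in> Jo"
    and x: "x \<in> Ar V" "Dom V x = v" "Cod V x = Ih V K c"
    and x': "x' \<in> Ar V" "Dom V x' = v" "Cod V x' = Ih V K' c'"
    and cotT: "is_cotensor V T v K' c' (\<tau> c' K' \<cdot> x')"
    and cotU: "is_cotensor V U v K' c' (\<upsilon> c' K' \<cdot> x')"
  shows "A c c' \<cdot> indmap V T v K K' c (\<tau> c K \<cdot> x) c' (\<tau> c' K' \<cdot> x')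
    = indmap V U v K K' c (\<upsilon> c K \<cdot> x) c' (\<upsilon> c' K' \<cdot> x') \<cdot> A K K'"
proof -
  have "A c c' \<cdot> indmap V T v K K' c (\<tau> c K \<cdot> x) c' (\<tau> c' K' \<cdot> x')
      = indmap V U v K K' c (A c K \<cdot> (\<tau> c K \<cdot> x)) c' (A c' K' \<cdot> (\<tau> c' K' \<cdot> x')) \<cdot> A K K'"
    by (rule vfun_indmap[OF Jtheory_vcat[OF T] Jtheory_vcat[OF U] theory_mor_vfun[OF A] cotT])
      (use cotU ob x x' T Jtheory_tau_ar[OF T] Jtheory_tau_dom[OF T] Jtheory_tau_cod[OF T]
        theory_mor_comp_tau[OF A T] in \<open>simp_all add: Jtheory_VOb\<close>)
  then show ?thesis using theory_mor_comp_tau[OF A T] ob x x' by simp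
qed

lemma Jtheory_cotensor_eL:
  assumes J: "arity_system V Jo" and T: "Jtheory V Jo T \<tau>" and jk: "j \<in> Jo" "k \<in> Jo"
  shows "is_cotensor V T j k (Tob V j k) (eL V \<tau> j k)"
  unfolding eL_def using J jk
  by (intro Jtheory_cotensor[OF T] jop_cotensor_coev) (auto simp: arity_system_def)

lemma Jtheory_cotensor_eR:
  assumes J: "arity_system V Jo" and T: "Jtheory V Jo T \<tau>" and jk: "j \<in> Jo" "k \<in> Jo"
  shows "is_cotensor V T j k (Tob V k j) (eR V \<tau> j k)"
  unfolding eR_def using J jk
  by (intro Jtheory_cotensor[OF T] jop_cotensor_coev') (auto simp: arity_system_def)

lemma lfun_ar[simp]: "arity_system V Jo \<Longrightarrow> Jtheory V Jo T \<tau> \<Longrightarrow> j \<in> Jo \<Longrightarrow> k \<in> Jo \<Longrightarrow> k' \<in> Jo \<Longrightarrow>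
    lfun V T \<tau> j k k' \<in> Ar V"
  and lfun_dom[simp]: "arity_system V Jo \<Longrightarrow> Jtheory V Jo T \<tau> \<Longrightarrow> j \<in> Jo \<Longrightarrow> k \<in> Jo \<Longrightarrow> k' \<in> Jo \<Longrightarrow>
    Dom V (lfun V T \<tau> j k k') = VHom T k k'"
  and lfun_cod[simp]: "arity_system V Jo \<Longrightarrow> Jtheory V Jo T \<tau> \<Longrightarrow> j \<in> Jo \<Longrightarrow> k \<in> Jo \<Longrightarrow> k' \<in> Jo \<Longrightarrow>
    Cod V (lfun V T \<tau> j k k') = VHom T (Tob V j k) (Tob V j k')"
  unfolding lfun_def
  using cotensor_counit[OF Jtheory_cotensor_eL] Jtheory_cotensor_eL Jtheory_vcat Jtheory_VOb arity_system_tensor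
  by simp_all

lemma rfun_ar[simp]: "arity_system V Jo \<Longrightarrow> Jtheory V Jo T \<tau> \<Longrightarrow> j \<in> Jo \<Longrightarrow> k \<in> Jo \<Longrightarrow> k' \<in> Jo \<Longrightarrow>
    rfun V T \<tau> j k k' \<in> Ar V"
  and rfun_dom[simp]: "arity_system V Jo \<Longrightarrow> Jtheory V Jo T \<tau> \<Longrightarrow> j \<in> Jo \<Longrightarrow> k \<in> Jo \<Longrightarrow> k' \<in> Jo \<Longrightarrow>
    Dom V (rfun V T \<tau> j k k') = VHom T k k'"
  and rfun_cod[simp]: "arity_system V Jo \<Longrightarrow> Jtheory V Jo T \<tau> \<Longrightarrow> j \<in> Jo \<Longrightarrow> k \<in> Jo \<Longrightarrow> k' \<in> Jo \<Longrightarrow>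
    Cod V (rfun V T \<tau> j k k') = VHom T (Tob V k j) (Tob V k' j)"
  unfolding rfun_def
  using cotensor_counit[OF Jtheory_cotensor_eR] Jtheory_cotensor_eR Jtheory_vcat Jtheory_VOb arity_system_tensor
  by simp_all

lemma theory_mor_lfun:
  assumes J: "arity_system V Jo" and T: "Jtheory V Jo T \<tau>" and U: "Jtheory V Jo U \<upsilon>"
    and A: "theory_mor V Jo T \<tau> U \<upsilon> A" and jk: "j \<in> Jo" "k \<in> Jo" "k' \<in> Jo"
  shows "A (Tob V j k) (Tob V j k') \<cdot> lfun V T \<tau> j k k' = lfun V U \<upsilon> j k k' \<cdot> A k k'"
  unfolding lfun_def eL_def
  using Jtheory_cotensor_eL[OF J T jk(1,3)] Jtheory_cotensor_eL[OF J U jk(1,3)] J jk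
  by (intro theory_mor_indmap[OF T U A]) (simp_all add: eL_def coev_def arity_system_def subset_iff)

lemma theory_mor_rfun:
  assumes J: "arity_system V Jo" and T: "Jtheory V Jo T \<tau>" and U: "Jtheory V Jo U \<upsilon>"
    and A: "theory_mor V Jo T \<tau> U \<upsilon> A" and jk: "j \<in> Jo" "k \<in> Jo" "k' \<in> Jo"
  shows "A (Tob V k j) (Tob V k' j) \<cdot> rfun V T \<tau> j k k' = rfun V U \<upsilon> j k k' \<cdot> A k k'"
  unfolding rfun_def eR_def
  using Jtheory_cotensor_eR[OF J T jk(1,3)] Jtheory_cotensor_eR[OF J U jk(1,3)] J jk
  by (intro theory_mor_indmap[OF T U A]) (simp_all add: eR_def coev'_def arity_system_def subset_iff)

lemma kron_ar[simp]: "arity_system V Jo \<Longrightarrow> Jtheory V Jo T \<tau> \<Longrightarrow> j \<in> Jo \<Longrightarrow> j' \<in> Jo \<Longrightarrow> k \<in> Jo \<Longrightarrow> k' \<in> Jo \<Longrightarrow>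
    kron V T \<tau> j j' k k' \<in> Ar V"
  and kron_dom[simp]: "arity_system V Jo \<Longrightarrow> Jtheory V Jo T \<tau> \<Longrightarrow> j \<in> Jo \<Longrightarrow> j' \<in> Jo \<Longrightarrow> k \<in> Jo \<Longrightarrow> k' \<in> Jo \<Longrightarrow>
    Dom V (kron V T \<tau> j j' k k') = Tob V (VHom T j j') (VHom T k k')"
  and kron_cod[simp]: "arity_system V Jo \<Longrightarrow> Jtheory V Jo T \<tau> \<Longrightarrow> j \<in> Jo \<Longrightarrow> j' \<in> Jo \<Longrightarrow> k \<in> Jo \<Longrightarrow> k' \<in> Jo \<Longrightarrow>
    Cod V (kron V T \<tau> j j' k k') = VHom T (Tob V j k) (Tob V j' k')"
  unfolding kron_def using Jtheory_vcat Jtheory_VOb arity_system_tensor by simp_all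

lemma kron'_ar[simp]: "arity_system V Jo \<Longrightarrow> Jtheory V Jo T \<tau> \<Longrightarrow> j \<in> Jo \<Longrightarrow> j' \<in> Jo \<Longrightarrow> k \<in> Jo \<Longrightarrow> k' \<in> Jo \<Longrightarrow>
    kron' V T \<tau> j j' k k' \<in> Ar V"
  and kron'_dom[simp]: "arity_system V Jo \<Longrightarrow> Jtheory V Jo T \<tau> \<Longrightarrow> j \<in> Jo \<Longrightarrow> j' \<in> Jo \<Longrightarrow> k \<in> Jo \<Longrightarrow> k' \<in> Jo \<Longrightarrow>
    Dom V (kron' V T \<tau> j j' k k') = Tob V (VHom T j j') (VHom T k k')"
  and kron'_cod[simp]: "arity_system V Jo \<Longrightarrow> Jtheory V Jo T \<tau> \<Longrightarrow> j \<in> Jo \<Longrightarrow> j' \<in> Jo \<Longrightarrow> k \<in> Jo \<Longrightarrow> k' \<in> Jo \<Longrightarrow>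
    Cod V (kron' V T \<tau> j j' k k') = VHom T (Tob V j k) (Tob V j' k')"
  unfolding kron'_def using Jtheory_vcat Jtheory_VOb arity_system_tensor by simp_all

lemma theory_mor_kron:
  assumes J: "arity_system V Jo" and T: "Jtheory V Jo T \<tau>" and U: "Jtheory V Jo U \<upsilon>"
    and A: "theory_mor V Jo T \<tau> U \<upsilon> A" and jk: "j \<in> Jo" "j' \<in> Jo" "k \<in> Jo" "k' \<in> Jo"
  shows "A (Tob V j k) (Tob V j' k') \<cdot> kron V T \<tau> j j' k k' = kron V U \<upsilon> j j' k k' \<cdot> (A j j' \<odot> A k k')"
proof -
  define a b c where "a = Tob V j k" and "b = Tob V j' k" and "c = Tob V j' k'"
  note abc_def = a_def b_def c_def
  have ob: "a \<in> Jo" "b \<in> Jo" "c \<in> Jo" using J jk unfolding abc_def by (simp_all add: arity_system_tensor)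
  have F: "vfun V T U A" by (rule theory_mor_vfun[OF A])
  let ?r = "rfun V T \<tau> k j j'" and ?l = "lfun V T \<tau> j' k k'"
  let ?rU = "rfun V U \<upsilon> k j j'" and ?lU = "lfun V U \<upsilon> j' k k'"
  note simps = J T U F ob jk Jtheory_vcat[OF T] Jtheory_vcat[OF U] Jtheory_VOb[OF T] Jtheory_VOb[OF U]
    rfun_ar rfun_dom rfun_cod lfun_ar lfun_dom lfun_cod abc_def[symmetric]
  have comp: "A a c \<cdot> VComp T a b c = VComp U a b c \<cdot> (A b c \<odot> A a b)"
    using vfun_comp[OF F] simps by simp
  have "A a c \<cdot> kron V T \<tau> j j' k k' = (A a c \<cdot> VComp T a b c) \<cdot> (Sy V (VHom T a b) (VHom T b c) \<cdot> (?r \<odot> ?l))"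
    unfolding kron_def abc_def[symmetric] using simps by simp
  also have "\<dots> = VComp U a b c \<cdot> (((A b c \<odot> A a b) \<cdot> Sy V (VHom T a b) (VHom T b c)) \<cdot> (?r \<odot> ?l))"
    unfolding comp using simps by simp
  also have "(A b c \<odot> A a b) \<cdot> Sy V (VHom T a b) (VHom T b c) = Sy V (VHom U a b) (VHom U b c) \<cdot> (A a b \<odot> A b c)"
    using sym_nat[of "A a b" "A b c"] simps by simp
  also have "(Sy V (VHom U a b) (VHom U b c) \<cdot> (A a b \<odot> A b c)) \<cdot> (?r \<odot> ?l)
      = Sy V (VHom U a b) (VHom U b c) \<cdot> ((A a b \<cdot> ?r) \<odot> (A b c \<cdot> ?l))"
    using simps by (simp add: interchange)
  also have "(A a b \<cdot> ?r) \<odot> (A b c \<cdot> ?l) = (?rU \<odot> ?lU) \<cdot> (A j j' \<odot> A k k')"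
    using theory_mor_rfun[OF J T U A jk(3,1,2)] theory_mor_lfun[OF J T U A jk(2,3,4)] simps
    by (simp add: interchange)
  also have "VComp U a b c \<cdot> (Sy V (VHom U a b) (VHom U b c) \<cdot> ((?rU \<odot> ?lU) \<cdot> (A j j' \<odot> A k k')))
      = kron V U \<upsilon> j j' k k' \<cdot> (A j j' \<odot> A k k')"
    unfolding kron_def abc_def[symmetric] using simps by simp
  finally show ?thesis unfolding abc_def .
qed

lemma theory_mor_kron':
  assumes J: "arity_system V Jo" and T: "Jtheory V Jo T \<tau>" and U: "Jtheory V Jo U \<upsilon>"
    and A: "theory_mor V Jo T \<tau> U \<upsilon> A" and jk: "j \<in> Jo" "j' \<in> Jo" "k \<in> Jo" "k' \<in> Jo"
  shows "A (Tob V j k) (Tob V j' k') \<cdot> kron' V T \<tau> j j' k k' = kron' V U \<upsilon> j j' k k' \<cdot> (A j j' \<odot> A k k')"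
proof -
  define a b c where "a = Tob V j k" and "b = Tob V j k'" and "c = Tob V j' k'"
  note abc_def = a_def b_def c_def
  have ob: "a \<in> Jo" "b \<in> Jo" "c \<in> Jo" using J jk unfolding abc_def by (simp_all add: arity_system_tensor)
  have F: "vfun V T U A" by (rule theory_mor_vfun[OF A])
  let ?r = "rfun V T \<tau> k' j j'" and ?l = "lfun V T \<tau> j k k'"
  let ?rU = "rfun V U \<upsilon> k' j j'" and ?lU = "lfun V U \<upsilon> j k k'"
  note simps = J T U F ob jk Jtheory_vcat[OF T] Jtheory_vcat[OF U] Jtheory_VOb[OF T] Jtheory_VOb[OF U]
    rfun_ar rfun_dom rfun_cod lfun_ar lfun_dom lfun_cod abc_def[symmetric]
  have comp: "A a c \<cdot> VComp T a b c = VComp U a b c \<cdot> (A b c \<odot> A a b)"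
    using vfun_comp[OF F] simps by simp
  have "A a c \<cdot> kron' V T \<tau> j j' k k' = (A a c \<cdot> VComp T a b c) \<cdot> (?r \<odot> ?l)"
    unfolding kron'_def abc_def[symmetric] using simps by simp
  also have "\<dots> = VComp U a b c \<cdot> ((A b c \<cdot> ?r) \<odot> (A a b \<cdot> ?l))"
    unfolding comp using simps by (simp add: interchange)
  also have "(A b c \<cdot> ?r) \<odot> (A a b \<cdot> ?l) = (?rU \<odot> ?lU) \<cdot> (A j j' \<odot> A k k')"
    using theory_mor_rfun[OF J T U A jk(4,1,2)] theory_mor_lfun[OF J T U A jk(1,3,4)] simps
    by (simp add: interchange)
  also have "VComp U a b c \<cdot> ((?rU \<odot> ?lU) \<cdot> (A j j' \<odot> A k k')) = kron' V U \<upsilon> j j' k k' \<cdot> (A j j' \<odot> A k k')"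
    unfolding kron'_def abc_def[symmetric] using simps by simp
  finally show ?thesis unfolding abc_def .
qed

lemma theory_mor_kron_tensor:
  assumes J: "arity_system V Jo" and T: "Jtheory V Jo T \<tau>" and U: "Jtheory V Jo U \<upsilon>"
    and A: "theory_mor V Jo T \<tau> U \<upsilon> A" and jk: "j \<in> Jo" "j' \<in> Jo" "k \<in> Jo" "k' \<in> Jo"
    and f: "f \<in> Ar V" "Cod V f = VHom T j j'" and g: "g \<in> Ar V" "Cod V g = VHom T k k'"
  shows "kron V U \<upsilon> j j' k k' \<cdot> ((A j j' \<cdot> f) \<odot> (A k k' \<cdot> g))
      = A (Tob V j k) (Tob V j' k') \<cdot> (kron V T \<tau> j j' k k' \<cdot> (f \<odot> g))"
    and "kron' V U \<upsilon> j j' k k' \<cdot> ((A j j' \<cdot> f) \<odot> (A k k' \<cdot> g))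
      = A (Tob V j k) (Tob V j' k') \<cdot> (kron' V T \<tau> j j' k k' \<cdot> (f \<odot> g))"
proof -
  note simps = J T U jk f g theory_mor_vfun[OF A] Jtheory_VOb[OF T] arity_system_tensor
  have split: "(A j j' \<cdot> f) \<odot> (A k k' \<cdot> g) = (A j j' \<odot> A k k') \<cdot> (f \<odot> g)"
    using simps by (simp add: interchange)
  show "kron V U \<upsilon> j j' k k' \<cdot> ((A j j' \<cdot> f) \<odot> (A k k' \<cdot> g))
      = A (Tob V j k) (Tob V j' k') \<cdot> (kron V T \<tau> j j' k k' \<cdot> (f \<odot> g))"
    unfolding split using theory_mor_kron[OF J T U A jk] simps by (simp flip: comp_assoc)
  show "kron' V U \<upsilon> j j' k k' \<cdot> ((A j j' \<cdot> f) \<odot> (A k k' \<cdot> g))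
      = A (Tob V j k) (Tob V j' k') \<cdot> (kron' V T \<tau> j j' k k' \<cdot> (f \<odot> g))"
    unfolding split using theory_mor_kron'[OF J T U A jk] simps by (simp flip: comp_assoc)
qed

lemma mono_in_cancel: "mono_in V m \<Longrightarrow> f \<in> Ar V \<Longrightarrow> g \<in> Ar V \<Longrightarrow> Dom V f = Dom V g \<Longrightarrow>
    Cod V f = Dom V m \<Longrightarrow> Cod V g = Dom V m \<Longrightarrow> m \<cdot> f = m \<cdot> g \<Longrightarrow> f = g"
  unfolding mono_in_def by blast

lemma commutes_theory_mor:
  assumes J: "arity_system V Jo" and T: "Jtheory V Jo T \<tau>" and U: "Jtheory V Jo U \<upsilon>"
    and A: "theory_mor V Jo T \<tau> U \<upsilon> A"
    and F: "\<And>a b. a \<in> Jo \<Longrightarrow> b \<in> Jo \<Longrightarrow> F a b \<in> Ar V \<and> Cod V (F a b) = VHom T a b"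
    and G: "\<And>a b. a \<in> Jo \<Longrightarrow> b \<in> Jo \<Longrightarrow> G a b \<in> Ar V \<and> Cod V (G a b) = VHom T a b"
    and FG: "commutes V Jo T \<tau> F G"
  shows "commutes V Jo U \<upsilon> (\<lambda>a b. A a b \<cdot> F a b) (\<lambda>a b. A a b \<cdot> G a b)"
  unfolding commutes_def
proof (intro ballI)
  fix j j' k k' assume jk: "j \<in> Jo" "j' \<in> Jo" "k \<in> Jo" "k' \<in> Jo"
  have "kron V T \<tau> j j' k k' \<cdot> (F j j' \<odot> G k k') = kron' V T \<tau> j j' k k' \<cdot> (F j j' \<odot> G k k')"
    using FG jk unfolding commutes_def by blast
  then show "kron V U \<upsilon> j j' k k' \<cdot> ((A j j' \<cdot> F j j') \<odot> (A k k' \<cdot> G k k'))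
      = kron' V U \<upsilon> j j' k k' \<cdot> ((A j j' \<cdot> F j j') \<odot> (A k k' \<cdot> G k k'))"
    using theory_mor_kron_tensor[OF J T U A jk] F[OF jk(1,2)] G[OF jk(3,4)] by simp
qed

lemma commutes_reflect_theory_mor:
  assumes J: "arity_system V Jo" and T: "Jtheory V Jo T \<tau>" and U: "Jtheory V Jo U \<upsilon>"
    and A: "theory_mor V Jo T \<tau> U \<upsilon> A" and mono: "\<And>a b. a \<in> Jo \<Longrightarrow> b \<in> Jo \<Longrightarrow> mono_in V (A a b)"
    and F: "\<And>a b. a \<in> Jo \<Longrightarrow> b \<in> Jo \<Longrightarrow> F a b \<in> Ar V \<and> Cod V (F a b) = VHom T a b"
    and G: "\<And>a b. a \<in> Jo \<Longrightarrow> b \<in> Jo \<Longrightarrow> G a b \<in> Ar V \<and> Cod V (G a b) = VHom T a b"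
    and AFG: "commutes V Jo U \<upsilon> (\<lambda>a b. A a b \<cdot> F a b) (\<lambda>a b. A a b \<cdot> G a b)"
  shows "commutes V Jo T \<tau> F G"
  unfolding commutes_def
proof (intro ballI)
  fix j j' k k' assume jk: "j \<in> Jo" "j' \<in> Jo" "k \<in> Jo" "k' \<in> Jo"
  have "kron V U \<upsilon> j j' k k' \<cdot> ((A j j' \<cdot> F j j') \<odot> (A k k' \<cdot> G k k'))
      = kron' V U \<upsilon> j j' k k' \<cdot> ((A j j' \<cdot> F j j') \<odot> (A k k' \<cdot> G k k'))"
    using AFG jk unfolding commutes_def by blast
  then have "A (Tob V j k) (Tob V j' k') \<cdot> (kron V T \<tau> j j' k k' \<cdot> (F j j' \<odot> G k k'))
      = A (Tob V j k) (Tob V j' k') \<cdot> (kron' V T \<tau> j j' k k' \<cdot> (F j j' \<odot> G k k'))"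
    using theory_mor_kron_tensor[OF J T U A jk] F[OF jk(1,2)] G[OF jk(3,4)] by simp
  then show "kron V T \<tau> j j' k k' \<cdot> (F j j' \<odot> G k k') = kron' V T \<tau> j j' k k' \<cdot> (F j j' \<odot> G k k')"
    by (rule mono_in_cancel[OF mono, rotated -1])
      (use J T jk F G theory_mor_vfun[OF A] Jtheory_VOb[OF T] in \<open>simp_all add: arity_system_tensor\<close>)
qed

lemma theory_mor_hom: "theory_mor V Jo PP \<pi> T \<tau> P \<Longrightarrow> Jtheory V Jo PP \<pi> \<Longrightarrow> a \<in> Jo \<Longrightarrow> b \<in> Jo \<Longrightarrow>
    P a b \<in> Ar V \<and> Cod V (P a b) = VHom T a b"
  using vfun_ar[OF theory_mor_vfun] vfun_cod[OF theory_mor_vfun] Jtheory_VOb by blast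

end

theorem proposition5p15:
  fixes V :: "('o,'m) vbase" and Jo :: "'o set"
    and PP QQ T U :: "('o,'m) vcat"
    and \<pi> \<kappa> \<tau> \<upsilon> P Q A :: "'o \<Rightarrow> 'o \<Rightarrow> 'm"
  assumes "smcc V" and "arity_system V Jo"
    and "Jtheory V Jo PP \<pi>" and "Jtheory V Jo QQ \<kappa>"
    and "Jtheory V Jo T \<tau>" and "Jtheory V Jo U \<upsilon>"
    and "theory_mor V Jo PP \<pi> T \<tau> P"
    and "theory_mor V Jo QQ \<kappa> T \<tau> Q"
    and "theory_mor V Jo T \<tau> U \<upsilon> A"
  shows "(commutes V Jo T \<tau> P Q \<longrightarrow>
            commutes V Jo U \<upsilon> (\<lambda>a b. Cmp V (A a b) (P a b)) (\<lambda>a b. Cmp V (A a b) (Q a b)))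
       \<and> ((\<forall>a\<in>Jo. \<forall>b\<in>Jo. mono_in V (A a b)) \<and>
            commutes V Jo U \<upsilon> (\<lambda>a b. Cmp V (A a b) (P a b)) (\<lambda>a b. Cmp V (A a b) (Q a b)) \<longrightarrow>
            commutes V Jo T \<tau> P Q)"
proof -
  interpret smc V by unfold_locales (rule assms(1))
  note P = theory_mor_hom[OF assms(7,3)] and Q = theory_mor_hom[OF assms(8,4)]
  show ?thesis
    using commutes_theory_mor[OF assms(2,5,6,9) P Q]
      commutes_reflect_theory_mor[OF assms(2,5,6,9) _ P Q] by blast
qed

end
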